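(* Let $\Omega\subseteq\mathbb{R}^d$ be a convex open set and $f:\Omega\to\mathbb{R}$ a $\lambda$-convex function for some $\lambda\le0$. There exists a constant $C\ge0$ depending only on $d$ such that \[\int_\Omega\sup_{y\in B_r(x)\cap\Omega}\big|f(y)-(f(x)+\nabla f(x)\cdot(y-x))\big|\,\mathrm{d}x\le C\,r^2\,\mathscr{H}^{d-1}(\partial\Omega)\big([f]_{\mathscr{C}^{0,1}(\Omega)}+|\lambda|\operatorname{diam}(\Omega)\big)\] for every $r>0$.
   Context: $f$ is $\lambda$-convex if $x\mapsto f(x)-\lambda|x|^2/2$ is convex; such $f$ is differentiable Lebesgue-a.e. on $\Omega$, and the integrand is defined at such points. $[f]_{\mathscr{C}^{0,1}(\Omega)}\in[0,\infty]$ is the Lipschitz constant of $f$ on $\Omega$, $B_r(x)$ the open Euclidean ball, and $\mathscr{H}^{d-1}$ the $(d-1)$-dimensional Hausdorff measure. *)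

theory Defs
  imports "HOL-Analysis.Analysis"
begin

definition lambda_convex_on :: "real \<Rightarrow> 'a::real_inner set \<Rightarrow> ('a \<Rightarrow> real) \<Rightarrow> bool" where
  "lambda_convex_on lam S f \<longleftrightarrow> convex_on S (\<lambda>x. f x - lam * (norm x)\<^sup>2 / 2)"

text \<open>Lipschitz constant [f]_{C^{0,1}(S)} in [0,\<infinity>] (0 if S has at most one point).\<close>
definition lip_const :: "'a::metric_space set \<Rightarrow> ('a \<Rightarrow> real) \<Rightarrow> ennreal" where
  "lip_const S f = (SUP p\<in>{p. fst p \<in> S \<and> snd p \<in> S \<and> fst p \<noteq> snd p}. ennreal (\<bar>f (fst p) - f (snd p)\<bar> / dist (fst p) (snd p)))"

definition ediam :: "'a::metric_space set \<Rightarrow> ennreal" where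
  "ediam S = (if bounded S then ennreal (diameter S) else top)"

definition hausdorff_const :: "nat \<Rightarrow> real" where
  "hausdorff_const s = pi powr (real s / 2) / Gamma (real s / 2 + 1)"

definition hcost :: "nat \<Rightarrow> 'a::metric_space set \<Rightarrow> ennreal" where
  "hcost s E = (if E = {} then 0 else ennreal (hausdorff_const s * (diameter E / 2) ^ s))"

definition hausdorff_pre :: "nat \<Rightarrow> real \<Rightarrow> 'a::metric_space set \<Rightarrow> ennreal" where
  "hausdorff_pre s \<delta> A = (INF E\<in>{E :: nat \<Rightarrow> 'a set. A \<subseteq> (\<Union>i. E i) \<and>
        (\<forall>i. bounded (E i) \<and> diameter (E i) \<le> \<delta>)}. (\<Sum>i. hcost s (E i)))"

definition hausdorff_measure :: "nat \<Rightarrow> 'a::metric_space set \<Rightarrow> ennreal" where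
  "hausdorff_measure s A = (SUP \<delta>\<in>{0<..}. hausdorff_pre s \<delta> A)"

end

theory Submission
  imports Defs
begin

text \<open>
  Put \<open>\<mu> = -\<lambda>\<close> and \<open>g x = f x + \<mu>/2 |x - x0|^2\<close> for some \<open>x0 \<in> \<Omega>\<close>: then \<open>g\<close> is convex and
  \<open>M\<close>-Lipschitz with \<open>M = [f] + \<mu> diam \<Omega>\<close>, and the linearization errors of \<open>f\<close> and \<open>g\<close> on \<open>B_r(x)\<close>
  differ by at most \<open>\<mu> r^2/2\<close>. Integrated, this costs \<open>\<mu> r^2 |\<Omega>|/2\<close>, and
  \<open>|\<Omega>| \<le> C diam \<Omega> H^(d-1)(\<partial>\<Omega>)\<close> by the slab bound below for slabs of width \<open>2 diam \<Omega>\<close>.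

  At a point where \<open>g\<close> is differentiable (almost every point: along a line the jumps of the one-sided
  derivatives of \<open>g\<close> add up to at most \<open>2M\<close>), Jensen's inequality along the coordinate axes bounds
  the error of \<open>g\<close> by the sum of the second differences \<open>g(x+2Re_i) - g(x+Re_i) - g(x-Re_i) + g(x-2Re_i)\<close>,
  \<open>R = d r\<close>, if all \<open>x \<plusminus> 2Re_i\<close> lie in \<open>\<Omega>\<close>, and by \<open>2Mr\<close> otherwise. On a lattice line of step \<open>R\<close>
  the second differences telescope to six first differences, so they add up to at most \<open>6MR\<close>.
  Integrating over a slab \<open>{0 \<le> x\<cdot>e_i < R}\<close> of such lines, it remains to bound the measure of the
  part of the slab lying on lines that meet \<open>\<Omega>\<close>; each such line meets \<open>\<partial>\<Omega>\<close>, and covering \<open>\<partial>\<Omega>\<close>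
  by small sets gives the bound \<open>C R H^(d-1)(\<partial>\<Omega>)\<close>. The same bound controls the layer of points
  with some \<open>x \<plusminus> 2Re_i \<notin> \<Omega>\<close>. If \<open>\<Omega>\<close> is invariant along some \<open>e_i\<close>, then \<open>H^(d-1)(\<partial>\<Omega>) = \<infinity>\<close>.
\<close>

section \<open>Convex functions\<close>

lemma convex_on_slope_mono:
  fixes f :: "real \<Rightarrow> real"
  assumes f: "convex_on I f" and I: "a \<in> I" "d \<in> I" and "a < b" "c < d" "a \<le> c" "b \<le> d"
  shows "(f b - f a) / (b - a) \<le> (f d - f c) / (d - c)"
proof -
  have swap: "(f x - f y) / (x - y) = (f y - f x) / (y - x)" for x y
    by (metis minus_diff_eq minus_divide_divide)
  have "(f b - f a) / (b - a) \<le> (f d - f a) / (d - a)"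
    using convex_on_slope_le(1)[OF f I, of b] assms by (cases "b = d") (auto simp: swap)
  also have "\<dots> \<le> (f d - f c) / (d - c)"
    using convex_on_slope_le(2)[OF f I, of c] assms by (cases "a = c") (auto simp: swap)
  finally show ?thesis .
qed

lemma convex_line_between:
  fixes A :: "'a::real_vector set"
  assumes A: "convex A" and a: "z + a *\<^sub>R v \<in> A" and b: "z + b *\<^sub>R v \<in> A" and "a \<le> t" "t \<le> b"
  shows "z + t *\<^sub>R v \<in> A"
proof (cases "a = b")
  case True
  then show ?thesis using assms by simp
next
  case False
  define u where "u = (t - a) / (b - a)"
  have u: "0 \<le> u" "u \<le> 1" using assms False by (auto simp: u_def divide_simps)
  have "u * (b - a) = t - a" using False by (simp add: u_def)
  then have "(1 - u) * a + u * b = t" by (simp add: algebra_simps)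
  then have "(1 - u) *\<^sub>R (z + a *\<^sub>R v) + u *\<^sub>R (z + b *\<^sub>R v) = z + t *\<^sub>R v"
    by (simp add: algebra_simps flip: scaleR_add_left)
  then show ?thesis using convexD_alt[OF A a b u] by simp
qed

lemma convex_on_line:
  assumes "convex_on S g"
  shows "convex_on {t. x + t *\<^sub>R v \<in> S} (\<lambda>t. g (x + t *\<^sub>R v))"
proof -
  have comb: "(1 - u) *\<^sub>R (x + s *\<^sub>R v) + u *\<^sub>R (x + t *\<^sub>R v) = x + ((1 - u) * s + u * t) *\<^sub>R v"
    for u s t :: real
    by (simp add: algebra_simps)
  have S: "convex S" using assms by (rule convex_on_imp_convex)
  show ?thesis
  proof (rule convex_onI)
    show "convex {t. x + t *\<^sub>R v \<in> S}"
      unfolding convex_alt by (auto simp flip: comb intro: convexD_alt[OF S])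
    fix u s t :: real assume "0 < u" "u < 1" "s \<in> {t. x + t *\<^sub>R v \<in> S}" "t \<in> {t. x + t *\<^sub>R v \<in> S}"
    then show "g (x + ((1 - u) *\<^sub>R s + u *\<^sub>R t) *\<^sub>R v) \<le> (1 - u) * g (x + s *\<^sub>R v) + u * g (x + t *\<^sub>R v)"
      using convex_onD[OF assms, of u "x + s *\<^sub>R v" "x + t *\<^sub>R v"] by (simp add: comb)
  qed
qed

lemma has_derivative_diff_quot_at_right:
  fixes g :: "'a::real_normed_vector \<Rightarrow> real"
  assumes "(g has_derivative Dg) (at x)"
  shows "((\<lambda>t. (g (x + t *\<^sub>R v) - g x) / t) \<longlongrightarrow> Dg v) (at_right 0)"
proof -
  have lin: "linear Dg" using assms by (rule has_derivative_linear)
  have "((\<lambda>t. x + t *\<^sub>R v) has_derivative (\<lambda>t. t *\<^sub>R v)) (at 0)"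
    by (auto intro!: derivative_eq_intros)
  from has_derivative_compose[OF this, of g Dg] assms
  have "((\<lambda>t. g (x + t *\<^sub>R v)) has_derivative (\<lambda>t. t * Dg v)) (at 0)"
    by (simp add: o_def linear_cmul[OF lin])
  then have "((\<lambda>t. g (x + t *\<^sub>R v)) has_field_derivative Dg v) (at 0)"
    by (rule has_derivative_imp_has_field_derivative) simp
  then have "((\<lambda>t. (g (x + t *\<^sub>R v) - g x) / t) \<longlongrightarrow> Dg v) (at 0)"
    by (simp add: has_field_derivative_iff)
  then show ?thesis by (rule tendsto_mono[OF at_le, rotated]) simp
qed

lemma convex_on_ge_linearization:
  fixes g :: "'a::real_normed_vector \<Rightarrow> real"
  assumes cv: "convex_on S g" and x: "x \<in> S" and z: "z \<in> S" and D: "(g has_derivative Dg) (at x)"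
  shows "g x + Dg (z - x) \<le> g z"
proof -
  have "\<forall>\<^sub>F t in at_right (0::real). t \<in> {0<..<1}" by (rule eventually_at_right_real) simp
  then have "\<forall>\<^sub>F t in at_right 0. (g (x + t *\<^sub>R (z - x)) - g x) / t \<le> g z - g x"
  proof eventually_elim
    case (elim t)
    have "x + t *\<^sub>R (z - x) = (1 - t) *\<^sub>R x + t *\<^sub>R z" by (simp add: algebra_simps)
    then have "g (x + t *\<^sub>R (z - x)) \<le> (1 - t) * g x + t * g z"
      using convex_onD[OF cv, of t x z] elim x z by simp
    then show ?case using elim by (simp add: divide_simps algebra_simps)
  qed
  then have "Dg (z - x) \<le> g z - g x"
    by (intro tendsto_upperbound[OF has_derivative_diff_quot_at_right[OF D]]) simp_all
  then show ?thesis by simp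
qed

lemma lipschitz_on_derivative_bound:
  fixes g :: "'a::real_normed_vector \<Rightarrow> real"
  assumes "open S" "x \<in> S" "(g has_derivative Dg) (at x)" "M-lipschitz_on S g"
  shows "\<bar>Dg w\<bar> \<le> M * norm w"
proof -
  obtain r where r: "r > 0" "ball x r \<subseteq> S" using assms(1,2) open_contains_ball by blast
  have "\<forall>\<^sub>F t in at_right 0. t \<in> {0<..<r / (norm w + 1)}"
    using r(1) by (intro eventually_at_right_real divide_pos_pos) (simp_all add: add_nonneg_pos)
  then have "\<forall>\<^sub>F t in at_right 0. \<bar>(g (x + t *\<^sub>R w) - g x) / t\<bar> \<le> M * norm w"
  proof eventually_elim
    case (elim t)
    have "t * (norm w + 1) < r"
      using elim by (simp add: pos_less_divide_eq add_nonneg_pos)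
    then have "t * norm w < r" using elim by (simp add: distrib_left)
    then have "x + t *\<^sub>R w \<in> S" using elim r(2) by (auto simp: dist_norm)
    then have "\<bar>g (x + t *\<^sub>R w) - g x\<bar> \<le> M * dist (x + t *\<^sub>R w) x"
      using lipschitz_onD[OF assms(4) _ assms(2)] by (simp add: dist_real_def)
    also have "dist (x + t *\<^sub>R w) x = t * norm w" using elim by (simp add: dist_norm)
    finally show ?case using elim by (simp add: abs_divide divide_simps mult.commute mult.left_commute)
  qed
  then show ?thesis
    by (intro tendsto_upperbound[OF tendsto_rabs[OF has_derivative_diff_quot_at_right[OF assms(3)]]])
      simp_all
qed

lemma convex_on_second_diff_nonneg:
  fixes \<phi> :: "real \<Rightarrow> real"
  assumes "convex_on I \<phi>" "R > 0" "{-2*R..2*R} \<subseteq> I"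
  shows "0 \<le> \<phi> (2*R) - \<phi> R - \<phi> (-R) + \<phi> (-2*R)"
proof -
  have "(\<phi> (-R) - \<phi> (-2*R)) / (-R - (-2*R)) \<le> (\<phi> (2*R) - \<phi> R) / (2*R - R)"
    by (rule convex_on_slope_mono[OF assms(1)]) (use assms(2,3) in auto)
  then show ?thesis using assms(2) by (simp add: divide_simps)
qed

text \<open>The slope \<open>c\<close> and all difference quotients from \<open>0\<close> lie between the slopes of \<open>\<phi>\<close> on
  \<open>[-2R, -R]\<close> and on \<open>[R, 2R]\<close>.\<close>
lemma convex_on_above_tangent_le_second_diff:
  fixes \<phi> :: "real \<Rightarrow> real"
  assumes cv: "convex_on I \<phi>" and R: "R > 0" and sub: "{-2*R..2*R} \<subseteq> I"
    and tangent: "\<And>s. s \<in> I \<Longrightarrow> \<phi> 0 + c * s \<le> \<phi> s" and t: "\<bar>t\<bar> \<le> R"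
  shows "\<phi> t - \<phi> 0 - c * t \<le> \<phi> (2*R) - \<phi> R - \<phi> (-R) + \<phi> (-2*R)"
proof -
  have mem: "s \<in> I" if "-2*R \<le> s" "s \<le> 2*R" for s using sub that by auto
  define sp where "sp = (\<phi> (2*R) - \<phi> R) / (2*R - R)"
  define sm where "sm = (\<phi> (-R) - \<phi> (-2*R)) / (-R - (-2*R))"
  have gap: "\<phi> (2*R) - \<phi> R - \<phi> (-R) + \<phi> (-2*R) = R * (sp - sm)"
    unfolding sp_def sm_def using R by (simp add: field_simps)
  have "sm \<le> (\<phi> 0 - \<phi> (-R)) / (0 - (-R))" unfolding sm_def
    by (rule convex_on_slope_mono[OF cv]) (use R mem in auto)
  moreover have "(\<phi> 0 - \<phi> (-R)) / (0 - (-R)) \<le> c" using tangent[of "-R"] mem R by (simp add: field_simps)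
  ultimately have sm_c: "sm \<le> c" by linarith
  have "c \<le> (\<phi> R - \<phi> 0) / (R - 0)" using tangent[of R] mem R by (simp add: field_simps)
  moreover have "(\<phi> R - \<phi> 0) / (R - 0) \<le> sp" unfolding sp_def
    by (rule convex_on_slope_mono[OF cv]) (use R mem in auto)
  ultimately have c_sp: "c \<le> sp" by linarith
  consider "t > 0" | "t = 0" | "t < 0" by linarith
  then have "\<phi> t - \<phi> 0 - c * t \<le> \<bar>t\<bar> * (sp - sm)"
  proof cases
    case 1
    have "(\<phi> t - \<phi> 0) / (t - 0) \<le> sp" unfolding sp_def
      by (rule convex_on_slope_mono[OF cv]) (use R mem t 1 in auto)
    then have "\<phi> t - \<phi> 0 \<le> sp * t" using 1 by (simp add: field_simps)
    moreover have "sm * t \<le> c * t" using sm_c 1 by (intro mult_right_mono) auto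
    moreover have "\<bar>t\<bar> * (sp - sm) = sp * t - sm * t" using 1 by (simp add: algebra_simps)
    ultimately show ?thesis by linarith
  next
    case 3
    have "sm \<le> (\<phi> 0 - \<phi> t) / (0 - t)" unfolding sm_def
      by (rule convex_on_slope_mono[OF cv]) (use R mem t 3 in auto)
    then have "\<phi> t - \<phi> 0 \<le> sm * t" using 3 by (simp add: field_simps)
    moreover have "c * (- t) \<le> sp * (- t)" using c_sp 3 by (intro mult_right_mono) auto
    moreover have "\<bar>t\<bar> * (sp - sm) = sp * (- t) - sm * (- t)" using 3 by (simp add: algebra_simps)
    ultimately show ?thesis by linarith
  qed (use sm_c c_sp in simp)
  also have "\<dots> \<le> R * (sp - sm)" using t sm_c c_sp by (intro mult_right_mono) auto
  finally show ?thesis using gap by simp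
qed

lemma convex_on_Basis_jensen:
  fixes g :: "'a::euclidean_space \<Rightarrow> real"
  assumes cv: "convex_on S g" and lin: "linear L"
    and pts: "\<And>i. i \<in> Basis \<Longrightarrow> x + (real DIM('a) * (v \<bullet> i)) *\<^sub>R i \<in> S"
  shows "g (x + v) - g x - L v \<le>
    (\<Sum>i\<in>Basis. g (x + (real DIM('a) * (v \<bullet> i)) *\<^sub>R i) - g x - (real DIM('a) * (v \<bullet> i)) * L i)
      / real DIM('a)"
proof -
  let ?d = "real DIM('a)"
  define y where "y i = x + (?d * (v \<bullet> i)) *\<^sub>R i" for i
  have "(\<Sum>i\<in>Basis. (1 / ?d) *\<^sub>R y i) = (\<Sum>i\<in>(Basis::'a set). (1 / ?d) *\<^sub>R x) + (\<Sum>i\<in>Basis. (v \<bullet> i) *\<^sub>R i)"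
    by (simp add: y_def scaleR_add_right sum.distrib)
  also have "\<dots> = x + v" by (simp add: euclidean_representation sum_constant_scaleR)
  finally have avg: "(\<Sum>i\<in>Basis. (1 / ?d) *\<^sub>R y i) = x + v" .
  have "g (\<Sum>i\<in>Basis. (1 / ?d) *\<^sub>R y i) \<le> (\<Sum>i\<in>Basis. (1 / ?d) * g (y i))"
    by (rule convex_on_sum[OF _ _ cv]) (use pts y_def in auto)
  then have "g (x + v) \<le> (\<Sum>i\<in>Basis. g (y i)) / ?d" by (simp add: avg sum_divide_distrib)
  moreover have "L v = (\<Sum>i\<in>Basis. (?d * (v \<bullet> i)) * L i) / ?d"
  proof -
    have "L v = L (\<Sum>i\<in>Basis. (v \<bullet> i) *\<^sub>R i)" by (simp add: euclidean_representation)
    also have "\<dots> = (\<Sum>i\<in>Basis. (v \<bullet> i) * L i)" by (simp add: linear_sum[OF lin] linear_cmul[OF lin])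
    finally show ?thesis by (simp add: sum_divide_distrib)
  qed
  moreover have "(\<Sum>i\<in>Basis. g (y i) - g x - (?d * (v \<bullet> i)) * L i) / ?d
      = (\<Sum>i\<in>Basis. g (y i)) / ?d - g x - (\<Sum>i\<in>Basis. (?d * (v \<bullet> i)) * L i) / ?d"
    by (simp add: sum_subtractf diff_divide_distrib)
  ultimately show ?thesis unfolding y_def by linarith
qed

lemma convex_on_has_derivative_of_upper_bound:
  fixes g :: "'a::real_normed_vector \<Rightarrow> real"
  assumes cv: "convex_on S g" and S: "open S" "x \<in> S" and L: "bounded_linear L"
    and upper: "\<And>\<epsilon>. \<epsilon> > 0 \<Longrightarrow> \<exists>\<delta>>0. \<forall>u. norm u < \<delta> \<longrightarrow> g (x + u) - g x - L u \<le> \<epsilon> * norm u"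
  shows "(g has_derivative L) (at x)"
  unfolding has_derivative_at_alt
proof (intro conjI L allI impI)
  fix \<epsilon> :: real assume "\<epsilon> > 0"
  obtain \<delta> where \<delta>: "\<delta> > 0" and up: "\<And>u. norm u < \<delta> \<Longrightarrow> g (x + u) - g x - L u \<le> \<epsilon> * norm u"
    using upper[OF \<open>\<epsilon> > 0\<close>] by blast
  obtain r where r: "r > 0" "ball x r \<subseteq> S" using S open_contains_ball by blast
  show "\<exists>d>0. \<forall>y. norm (y - x) < d \<longrightarrow> norm (g y - g x - L (y - x)) \<le> \<epsilon> * norm (y - x)"
  proof (intro exI[of _ "min \<delta> r"] conjI allI impI)
    fix y assume y: "norm (y - x) < min \<delta> r"
    define u where "u = y - x"
    have u: "norm u < \<delta>" "norm u < r" using y by (simp_all add: u_def)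
    have "x + u \<in> S" "x - u \<in> S" using u r by (auto simp: dist_norm)
    then have "g ((1 - 1/2) *\<^sub>R (x + u) + (1/2) *\<^sub>R (x - u)) \<le> (1 - 1/2) * g (x + u) + (1/2) * g (x - u)"
      by (intro convex_onD[OF cv]) auto
    moreover have "(1 - 1/2) *\<^sub>R (x + u) + (1/2::real) *\<^sub>R (x - u) = x"
      by (simp add: algebra_simps flip: scaleR_add_left)
    ultimately have mid: "g x \<le> (g (x + u) + g (x - u)) / 2" by simp
    have "g (x - u) - g x - L (- u) \<le> \<epsilon> * norm u" using up[of "- u"] u by simp
    moreover have "g (x + u) - g x - L u \<le> \<epsilon> * norm u" using up u by simp
    ultimately have "\<bar>g (x + u) - g x - L u\<bar> \<le> \<epsilon> * norm u"
      using mid linear_neg[OF bounded_linear.linear[OF L]] by simp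
    then show "norm (g y - g x - L (y - x)) \<le> \<epsilon> * norm (y - x)" by (simp add: u_def)
  qed (use \<delta> r in simp)
qed

lemma convex_on_has_derivative_of_partials:
  fixes g :: "'a::euclidean_space \<Rightarrow> real"
  assumes cv: "convex_on S g" and S: "open S" "x \<in> S"
    and partial: "\<And>i. i \<in> Basis \<Longrightarrow> ((\<lambda>t. (g (x + t *\<^sub>R i) - g x) / t) \<longlongrightarrow> c i) (at 0)"
  shows "(g has_derivative (\<lambda>v. v \<bullet> (\<Sum>i\<in>Basis. c i *\<^sub>R i))) (at x)"
proof (rule convex_on_has_derivative_of_upper_bound[OF cv S bounded_linear_inner_left])
  let ?d = "real DIM('a)"
  define w where "w = (\<Sum>i\<in>Basis. c i *\<^sub>R i)"
  have w: "i \<bullet> w = c i" if "i \<in> Basis" for i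
    unfolding w_def using that by (simp add: inner_sum_right inner_Basis if_distrib sum.delta cong: if_cong)
  fix \<epsilon> :: real assume \<epsilon>: "\<epsilon> > 0"
  have "\<forall>\<^sub>F t in at 0. \<forall>i\<in>Basis. \<bar>(g (x + t *\<^sub>R i) - g x) / t - c i\<bar> < \<epsilon> / ?d"
    using partial \<epsilon> by (intro eventually_ball_finite) (auto simp: tendsto_iff dist_real_def)
  then obtain \<tau> where \<tau>: "\<tau> > 0"
    and near: "\<And>t i. t \<noteq> 0 \<Longrightarrow> \<bar>t\<bar> < \<tau> \<Longrightarrow> i \<in> Basis \<Longrightarrow> \<bar>(g (x + t *\<^sub>R i) - g x) / t - c i\<bar> < \<epsilon> / ?d"
    unfolding eventually_at by (auto simp: dist_real_def)
  obtain r where r: "r > 0" "ball x r \<subseteq> S" using S open_contains_ball by blast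
  show "\<exists>\<delta>>0. \<forall>u. norm u < \<delta> \<longrightarrow> g (x + u) - g x - u \<bullet> w \<le> \<epsilon> * norm u"
  proof (intro exI[of _ "min \<tau> r / ?d"] conjI allI impI)
    fix u :: 'a assume u: "norm u < min \<tau> r / ?d"
    define t where "t i = ?d * (u \<bullet> i)" for i
    have t: "\<bar>t i\<bar> \<le> ?d * norm u" "\<bar>t i\<bar> < min \<tau> r" if "i \<in> Basis" for i
    proof -
      show "\<bar>t i\<bar> \<le> ?d * norm u" unfolding t_def using Basis_le_norm[OF that, of u] by (simp add: abs_mult)
      then show "\<bar>t i\<bar> < min \<tau> r" using u by (simp add: field_simps)
    qed
    have mem: "x + t i *\<^sub>R i \<in> S" if "i \<in> Basis" for i
      using t(2)[OF that] that r by (auto simp: dist_norm)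
    have each: "g (x + t i *\<^sub>R i) - g x - t i * (i \<bullet> w) \<le> \<epsilon> * norm u" if i: "i \<in> Basis" for i
    proof (cases "t i = 0")
      case False
      have "g (x + t i *\<^sub>R i) - g x - t i * (i \<bullet> w) = t i * ((g (x + t i *\<^sub>R i) - g x) / t i - c i)"
        using False w[OF i] by (simp add: field_simps)
      also have "\<dots> \<le> \<bar>t i\<bar> * \<bar>(g (x + t i *\<^sub>R i) - g x) / t i - c i\<bar>"
        by (simp flip: abs_mult)
      also have "\<dots> \<le> \<bar>t i\<bar> * (\<epsilon> / ?d)"
        using near[OF False _ i] t(2)[OF i] by (intro mult_left_mono) auto
      also have "\<dots> \<le> (?d * norm u) * (\<epsilon> / ?d)" using t(1)[OF i] \<epsilon> by (intro mult_right_mono) auto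
      also have "\<dots> = \<epsilon> * norm u" by simp
      finally show ?thesis .
    qed (use \<epsilon> in simp)
    have "g (x + u) - g x - u \<bullet> w \<le> (\<Sum>i\<in>Basis. g (x + t i *\<^sub>R i) - g x - t i * (i \<bullet> w)) / ?d"
      unfolding t_def using mem t_def
      by (intro convex_on_Basis_jensen[OF cv bounded_linear.linear[OF bounded_linear_inner_left]]) auto
    also have "\<dots> \<le> (\<Sum>i\<in>(Basis::'a set). \<epsilon> * norm u) / ?d"
      using each by (intro divide_right_mono sum_mono) auto
    also have "\<dots> = \<epsilon> * norm u" by simp
    finally show "g (x + u) - g x - u \<bullet> w \<le> \<epsilon> * norm u" .
  qed (use \<tau> r in simp)
qed

definition second_diff :: "('a::real_vector \<Rightarrow> real) \<Rightarrow> real \<Rightarrow> 'a \<Rightarrow> 'a \<Rightarrow> real" where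
  "second_diff g R v x =
     g (x + (2*R) *\<^sub>R v) - g (x + R *\<^sub>R v) - g (x + (-R) *\<^sub>R v) + g (x + (-2*R) *\<^sub>R v)"

lemma second_diff_nonneg:
  assumes "convex_on S g" "R > 0" "x + (2*R) *\<^sub>R v \<in> S" "x + (-2*R) *\<^sub>R v \<in> S"
  shows "0 \<le> second_diff g R v x"
proof -
  have "{-2*R..2*R} \<subseteq> {t. x + t *\<^sub>R v \<in> S}"
    using convex_line_between[OF convex_on_imp_convex[OF assms(1)] assms(4) assms(3)] by auto
  from convex_on_second_diff_nonneg[OF convex_on_line[OF assms(1)] assms(2) this]
  show ?thesis by (simp add: second_diff_def)
qed

lemma linearization_le_sum_second_diff:
  fixes g :: "'a::euclidean_space \<Rightarrow> real"
  assumes cv: "convex_on S g" and x: "x \<in> S" and D: "(g has_derivative Dg) (at x)" and R: "R > 0"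
    and pts: "\<And>i. i \<in> Basis \<Longrightarrow> x + (2*R) *\<^sub>R i \<in> S \<and> x + (-2*R) *\<^sub>R i \<in> S"
    and v: "real DIM('a) * norm v \<le> R"
  shows "g (x + v) - g x - Dg v \<le> (\<Sum>i\<in>Basis. second_diff g R i x)"
proof -
  let ?d = "real DIM('a)"
  have lin: "linear Dg" using D by (rule has_derivative_linear)
  define t where "t i = ?d * (v \<bullet> i)" for i
  have line: "{-2*R..2*R} \<subseteq> {s. x + s *\<^sub>R i \<in> S}" if "i \<in> Basis" for i
    using convex_line_between[OF convex_on_imp_convex[OF cv], of x "-2*R" i "2*R"] pts[OF that] by auto
  have mem: "x + t i *\<^sub>R i \<in> S"
    and each: "g (x + t i *\<^sub>R i) - g x - t i * Dg i \<le> second_diff g R i x" if i: "i \<in> Basis" for i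
  proof -
    have "\<bar>t i\<bar> \<le> ?d * norm v"
      unfolding t_def using Basis_le_norm[OF i, of v] by (simp add: abs_mult mult_left_mono)
    then have tR: "\<bar>t i\<bar> \<le> R" using v by linarith
    then have "t i \<in> {-2*R..2*R}" using R by auto
    then show "x + t i *\<^sub>R i \<in> S" using line[OF i] by auto
    have "g (x + 0 *\<^sub>R i) + Dg i * s \<le> g (x + s *\<^sub>R i)" if "s \<in> {s. x + s *\<^sub>R i \<in> S}" for s
      using convex_on_ge_linearization[OF cv x _ D, of "x + s *\<^sub>R i"] that
      by (simp add: linear_cmul[OF lin] mult.commute)
    from convex_on_above_tangent_le_second_diff[OF convex_on_line[OF cv] R line[OF i] this tR]
    show "g (x + t i *\<^sub>R i) - g x - t i * Dg i \<le> second_diff g R i x"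
      by (simp add: second_diff_def mult.commute)
  qed
  have nonneg: "0 \<le> (\<Sum>i\<in>Basis. second_diff g R i x)"
    using second_diff_nonneg[OF cv R] pts by (intro sum_nonneg) auto
  have "g (x + v) - g x - Dg v \<le> (\<Sum>i\<in>Basis. g (x + t i *\<^sub>R i) - g x - t i * Dg i) / ?d"
    unfolding t_def by (rule convex_on_Basis_jensen[OF cv lin]) (use mem t_def in auto)
  also have "\<dots> \<le> (\<Sum>i\<in>Basis. second_diff g R i x) / ?d"
    using each by (intro divide_right_mono sum_mono) auto
  also have "\<dots> \<le> (\<Sum>i\<in>Basis. second_diff g R i x)"
    using nonneg by (simp add: divide_le_eq mult_le_cancel_left1 DIM_positive)
  finally show ?thesis .
qed

section \<open>Convex Lipschitz functions are differentiable almost everywhere\<close>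

lemma nn_integral_translate:
  fixes f :: "'a::euclidean_space \<Rightarrow> ennreal"
  assumes [measurable]: "f \<in> borel_measurable borel"
  shows "(\<integral>\<^sup>+x. f (x + c) \<partial>lborel) = (\<integral>\<^sup>+x. f x \<partial>lborel)"
proof -
  have "(\<integral>\<^sup>+x. f x \<partial>lborel) = (\<integral>\<^sup>+x. f x \<partial>(distr lborel borel ((+) c)))"
    by (simp add: lborel_distr_plus)
  also have "\<dots> = (\<integral>\<^sup>+x. f (c + x) \<partial>lborel)"
    by (subst nn_integral_distr) auto
  finally show ?thesis by (simp add: add.commute)
qed

lemma emeasure_le_by_translates:
  fixes A B :: "'a::euclidean_space set"
  assumes [measurable]: "A \<in> sets borel" "B \<in> sets borel"
    and count: "\<And>x. real (card {j\<in>{..<m}. x + c j \<in> A}) \<le> K"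
    and sub: "\<And>x j. j < m \<Longrightarrow> x + c j \<in> A \<Longrightarrow> x \<in> B"
  shows "of_nat m * emeasure lborel A \<le> ennreal K * emeasure lborel B"
proof -
  have "of_nat m * emeasure lborel A = (\<Sum>j<m. \<integral>\<^sup>+x. indicator A (x + c j) \<partial>lborel)"
    by (subst nn_integral_translate) auto
  also have "\<dots> = (\<integral>\<^sup>+x. (\<Sum>j<m. indicator A (x + c j)) \<partial>lborel)"
    by (rule nn_integral_sum[symmetric]) measurable
  also have "\<dots> \<le> (\<integral>\<^sup>+x. ennreal K * indicator B x \<partial>lborel)"
  proof (rule nn_integral_mono)
    fix x
    have "(\<Sum>j<m. indicator A (x + c j) :: ennreal) = of_nat (card {j\<in>{..<m}. x + c j \<in> A})"
      by (simp add: indicator_def sum.If_cases Int_def)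
    also have "\<dots> \<le> ennreal K * indicator B x"
    proof (cases "x \<in> B")
      case True
      then show ?thesis using count[of x] by (simp add: ennreal_of_nat_eq_real_of_nat ennreal_leI)
    next
      case False
      then have "{j\<in>{..<m}. x + c j \<in> A} = {}" using sub by blast
      then show ?thesis by (simp only:) simp
    qed
    finally show "(\<Sum>j<m. indicator A (x + c j)) \<le> ennreal K * indicator B x" .
  qed
  also have "\<dots> = ennreal K * emeasure lborel B" by (rule nn_integral_cmult_indicator) simp
  finally show ?thesis .
qed

lemma ennreal_eq_0_if_mult_of_nat_le:
  fixes a c :: ennreal
  assumes "c < top" and le: "\<And>m::nat. m \<ge> 1 \<Longrightarrow> of_nat m * a \<le> c"
  shows "a = 0"
proof (rule ccontr)
  assume "a \<noteq> 0"
  obtain c' where c': "c = ennreal c'" "c' \<ge> 0" using assms(1) by (cases c) auto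
  have "a \<le> c" using le[of 1] by simp
  then obtain a' where a': "a = ennreal a'" "a' > 0"
    using \<open>a \<noteq> 0\<close> assms(1) by (cases a) (auto simp: top_unique)
  obtain m :: nat where m: "c' / a' < real m" using reals_Archimedean2 by blast
  have "ennreal (real (Suc m) * a') \<le> ennreal c'"
    using le[of "Suc m"] a' c' by (simp add: ennreal_mult ennreal_of_nat_eq_real_of_nat)
  then have "real (Suc m) * a' \<le> c'" using c' by (simp add: ennreal_le_iff)
  moreover have "c' < real (Suc m) * a'" using m a' by (simp add: field_simps)
  ultimately show False by simp
qed

lemma open_translation_vimage: "open S \<Longrightarrow> open ((\<lambda>x. x + c) -` S)"
  for S :: "'a::real_normed_vector set"
  by (rule continuous_open_vimage) (auto intro!: continuous_intros)

locale convex_lipschitz =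
  fixes g :: "'a::euclidean_space \<Rightarrow> real" and S :: "'a set" and M :: real
  assumes convex: "convex_on S g" and open_S: "open S" and lipschitz: "M-lipschitz_on S g"
begin

lemma convex_S: "convex S"
  using convex by (rule convex_on_imp_convex)

lemma M_nonneg: "0 \<le> M"
  using lipschitz by (rule lipschitz_on_nonneg)

definition diff_quot :: "'a \<Rightarrow> 'a \<Rightarrow> real \<Rightarrow> real" where
  "diff_quot e x t = (g (x + t *\<^sub>R e) - g x) / t"

text \<open>The junk value \<open>b\<close> is used when the step leaves \<open>S\<close>; it makes the one-sided derivatives
  below measurable on the whole space.\<close>
definition step_quot :: "'a \<Rightarrow> real \<Rightarrow> real \<Rightarrow> 'a \<Rightarrow> real" where
  "step_quot e h b x = (if x \<in> S \<and> x + h *\<^sub>R e \<in> S then diff_quot e x h else b)"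

definition right_deriv :: "'a \<Rightarrow> 'a \<Rightarrow> real" where
  "right_deriv e x = (INF n. step_quot e (1 / real (Suc n)) M x)"

definition left_deriv :: "'a \<Rightarrow> 'a \<Rightarrow> real" where
  "left_deriv e x = (SUP n. step_quot e (- 1 / real (Suc n)) (- M) x)"

definition jump :: "'a \<Rightarrow> 'a \<Rightarrow> real" where
  "jump e x = right_deriv e x - left_deriv e x"

lemma diff_quot_bound:
  assumes "norm e = 1" "x \<in> S" "x + t *\<^sub>R e \<in> S" "t \<noteq> 0"
  shows "\<bar>diff_quot e x t\<bar> \<le> M"
proof -
  have "\<bar>g (x + t *\<^sub>R e) - g x\<bar> \<le> M * dist (x + t *\<^sub>R e) x"
    using lipschitz_onD[OF lipschitz assms(3,2)] by (simp add: dist_real_def)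
  also have "dist (x + t *\<^sub>R e) x = \<bar>t\<bar>" using assms(1) by (simp add: dist_norm)
  finally show ?thesis unfolding diff_quot_def using assms(4) by (simp add: abs_divide divide_le_eq)
qed

lemma step_quot_bound:
  assumes "norm e = 1" "h \<noteq> 0" "\<bar>b\<bar> \<le> M"
  shows "\<bar>step_quot e h b x\<bar> \<le> M"
  unfolding step_quot_def using diff_quot_bound[OF assms(1) _ _ assms(2), of x] assms(3) by auto

lemma diff_quot_mono:
  assumes x: "x \<in> S" and s: "x + s *\<^sub>R e \<in> S" and t: "x + t *\<^sub>R e \<in> S"
    and st: "s < t" "s \<noteq> 0" "t \<noteq> 0"
  shows "diff_quot e x s \<le> diff_quot e x t"
proof -
  define \<phi> where "\<phi> u = g (x + u *\<^sub>R e)" for u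
  have cv: "convex_on {u. x + u *\<^sub>R e \<in> S} \<phi>" unfolding \<phi>_def by (rule convex_on_line[OF convex])
  have I: "s \<in> {u. x + u *\<^sub>R e \<in> S}" "t \<in> {u. x + u *\<^sub>R e \<in> S}" "0 \<in> {u. x + u *\<^sub>R e \<in> S}"
    using x s t by auto
  have right: "diff_quot e x u = (\<phi> u - \<phi> 0) / (u - 0)" for u unfolding diff_quot_def \<phi>_def by simp
  have left: "diff_quot e x u = (\<phi> 0 - \<phi> u) / (0 - u)" for u
    unfolding diff_quot_def \<phi>_def by (cases "u = 0") (simp_all add: field_simps)
  consider "t < 0" | "s < 0" "0 < t" | "0 < s" using st by linarith
  then show ?thesis
  proof cases
    case 1
    then show ?thesis unfolding left by (intro convex_on_slope_mono[OF cv I(1,3)]) (use st in auto)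
  next
    case 2
    then show ?thesis unfolding left[of s] right[of t]
      by (intro convex_on_slope_mono[OF cv I(1,2)]) (use st in auto)
  next
    case 3
    then show ?thesis unfolding right by (intro convex_on_slope_mono[OF cv I(3,2)]) (use st in auto)
  qed
qed

lemma diff_quot_le_step_quot:
  assumes "norm e = 1" "x \<in> S" "x + t *\<^sub>R e \<in> S" "t \<noteq> 0" "t \<le> h" "0 < h"
  shows "diff_quot e x t \<le> step_quot e h M x"
  using diff_quot_mono[OF assms(2,3), of h] diff_quot_bound[OF assms(1-4)] assms(4-6)
  by (cases "t = h") (auto simp: step_quot_def)

lemma step_quot_le_diff_quot:
  assumes "norm e = 1" "x \<in> S" "x + t *\<^sub>R e \<in> S" "t \<noteq> 0" "h \<le> t" "h < 0"
  shows "step_quot e h (- M) x \<le> diff_quot e x t"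
  using diff_quot_mono[OF assms(2) _ assms(3), of h] diff_quot_bound[OF assms(1-4)] assms(4-6)
  by (cases "t = h") (auto simp: step_quot_def)

lemma right_quot_ge: "norm e = 1 \<Longrightarrow> - M \<le> step_quot e (1 / real (Suc n)) M x"
  using step_quot_bound[of e "1 / real (Suc n)" M x] M_nonneg by (simp add: abs_le_iff)

lemma left_quot_le: "norm e = 1 \<Longrightarrow> step_quot e (- 1 / real (Suc n)) (- M) x \<le> M"
  using step_quot_bound[of e "- 1 / real (Suc n)" "- M" x] M_nonneg by (simp add: abs_le_iff)

lemma bdd_below_right_quots:
  "norm e = 1 \<Longrightarrow> bdd_below (range (\<lambda>n. step_quot e (1 / real (Suc n)) M x))"
  by (rule bdd_belowI2) (rule right_quot_ge)

lemma bdd_above_left_quots: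
  "norm e = 1 \<Longrightarrow> bdd_above (range (\<lambda>n. step_quot e (- 1 / real (Suc n)) (- M) x))"
  by (rule bdd_aboveI2) (rule left_quot_le)

lemma right_deriv_bound:
  assumes e: "norm e = 1"
  shows "\<bar>right_deriv e x\<bar> \<le> M"
proof -
  have "right_deriv e x \<le> step_quot e (1 / real (Suc 0)) M x"
    unfolding right_deriv_def by (rule cINF_lower[OF bdd_below_right_quots[OF e]]) simp
  also have "\<bar>step_quot e (1 / real (Suc 0)) M x\<bar> \<le> M"
    by (rule step_quot_bound[OF e]) (use M_nonneg in auto)
  moreover have "- M \<le> right_deriv e x"
    unfolding right_deriv_def using right_quot_ge[OF e] by (intro cINF_greatest) auto
  ultimately show ?thesis by (simp add: abs_le_iff)
qed

lemma left_deriv_bound: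
  assumes e: "norm e = 1"
  shows "\<bar>left_deriv e x\<bar> \<le> M"
proof -
  have "\<bar>step_quot e (- 1 / real (Suc 0)) (- M) x\<bar> \<le> M"
    by (rule step_quot_bound[OF e]) (use M_nonneg in auto)
  moreover have "step_quot e (- 1 / real (Suc 0)) (- M) x \<le> left_deriv e x"
    unfolding left_deriv_def by (rule cSUP_upper[OF _ bdd_above_left_quots[OF e]]) simp
  moreover have "left_deriv e x \<le> M"
    unfolding left_deriv_def using left_quot_le[OF e] by (intro cSUP_least) auto
  ultimately show ?thesis by (simp add: abs_le_iff)
qed

lemma right_deriv_le_diff_quot:
  assumes e: "norm e = 1" and x: "x \<in> S" and t: "t > 0" "x + t *\<^sub>R e \<in> S"
  shows "right_deriv e x \<le> diff_quot e x t"
proof -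
  obtain n :: nat where n: "1 / real (Suc n) < t"
    using t(1) by (metis nat_approx_posE)
  have mem: "x + (1 / real (Suc n)) *\<^sub>R e \<in> S"
    using convex_line_between[OF convex_S, of x 0 e t "1 / real (Suc n)"] x t n by simp
  have "right_deriv e x \<le> step_quot e (1 / real (Suc n)) M x"
    unfolding right_deriv_def by (rule cINF_lower[OF bdd_below_right_quots[OF e]]) simp
  also have "\<dots> = diff_quot e x (1 / real (Suc n))" using x mem by (simp add: step_quot_def)
  also have "\<dots> \<le> diff_quot e x t" by (rule diff_quot_mono[OF x mem t(2) n]) (use t in auto)
  finally show ?thesis .
qed

lemma diff_quot_le_left_deriv:
  assumes e: "norm e = 1" and x: "x \<in> S" and t: "t < 0" "x + t *\<^sub>R e \<in> S"
  shows "diff_quot e x t \<le> left_deriv e x"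
proof -
  obtain n :: nat where n: "1 / real (Suc n) < - t"
    using t(1) by (metis neg_0_less_iff_less nat_approx_posE)
  have n': "t < - 1 / real (Suc n)" using n by simp
  have mem: "x + (- 1 / real (Suc n)) *\<^sub>R e \<in> S"
    using convex_line_between[OF convex_S, of x t e 0 "- 1 / real (Suc n)"] x t n' by simp
  have "diff_quot e x t \<le> diff_quot e x (- 1 / real (Suc n))"
    by (rule diff_quot_mono[OF x t(2) mem n']) (use t in auto)
  also have "\<dots> = step_quot e (- 1 / real (Suc n)) (- M) x" using x mem by (simp add: step_quot_def)
  also have "\<dots> \<le> left_deriv e x"
    unfolding left_deriv_def by (rule cSUP_upper[OF _ bdd_above_left_quots[OF e]]) simp
  finally show ?thesis .
qed

lemma left_deriv_le_right_deriv:
  assumes e: "norm e = 1" and x: "x \<in> S"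
  shows "left_deriv e x \<le> right_deriv e x"
  unfolding left_deriv_def right_deriv_def
proof (intro cSUP_least cINF_greatest)
  fix m n :: nat
  show "step_quot e (- 1 / real (Suc m)) (- M) x \<le> step_quot e (1 / real (Suc n)) M x"
  proof (cases "x + (1 / real (Suc n)) *\<^sub>R e \<in> S")
    case True
    have "step_quot e (- 1 / real (Suc m)) (- M) x \<le> diff_quot e x (1 / real (Suc n))"
      by (rule step_quot_le_diff_quot[OF e x True]) (auto simp: divide_simps)
    then show ?thesis using x True by (simp add: step_quot_def)
  next
    case False
    have "\<bar>step_quot e (- 1 / real (Suc m)) (- M) x\<bar> \<le> M"
      by (rule step_quot_bound[OF e]) (use M_nonneg in auto)
    then show ?thesis using False by (simp add: step_quot_def)
  qed
qed simp_all

lemma right_deriv_le_left_deriv: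
  assumes e: "norm e = 1" and a: "x + a *\<^sub>R e \<in> S" and b: "x + b *\<^sub>R e \<in> S" and ab: "a < b"
  shows "right_deriv e (x + a *\<^sub>R e) \<le> left_deriv e (x + b *\<^sub>R e)"
proof -
  have ba: "(x + a *\<^sub>R e) + (b - a) *\<^sub>R e = x + b *\<^sub>R e" "(x + b *\<^sub>R e) + (a - b) *\<^sub>R e = x + a *\<^sub>R e"
    by (simp_all add: algebra_simps)
  have "right_deriv e (x + a *\<^sub>R e) \<le> diff_quot e (x + a *\<^sub>R e) (b - a)"
    using right_deriv_le_diff_quot[OF e a, of "b - a"] ab b by (simp add: ba)
  also have "\<dots> = diff_quot e (x + b *\<^sub>R e) (a - b)"
    unfolding diff_quot_def ba using ab by (simp add: divide_simps) (simp add: algebra_simps)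
  also have "\<dots> \<le> left_deriv e (x + b *\<^sub>R e)"
    using diff_quot_le_left_deriv[OF e b, of "a - b"] ab a by (simp add: ba)
  finally show ?thesis .
qed

lemma tendsto_diff_quot:
  assumes e: "norm e = 1" and x: "x \<in> S" and no_jump: "jump e x = 0"
  shows "(diff_quot e x \<longlongrightarrow> right_deriv e x) (at 0)"
  unfolding tendsto_iff
proof (intro allI impI)
  fix \<epsilon> :: real assume \<epsilon>: "\<epsilon> > 0"
  obtain r where r: "r > 0" "ball x r \<subseteq> S" using open_S x open_contains_ball by blast
  have "(INF n. step_quot e (1 / real (Suc n)) M x) < right_deriv e x + \<epsilon>"
    using \<epsilon> by (simp add: right_deriv_def)
  then obtain n where n: "step_quot e (1 / real (Suc n)) M x < right_deriv e x + \<epsilon>"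
    by (subst (asm) cINF_less_iff[OF UNIV_not_empty bdd_below_right_quots[OF e]]) auto
  have "left_deriv e x - \<epsilon> < (SUP n. step_quot e (- 1 / real (Suc n)) (- M) x)"
    using \<epsilon> by (simp add: left_deriv_def)
  then obtain m where m: "left_deriv e x - \<epsilon> < step_quot e (- 1 / real (Suc m)) (- M) x"
    by (subst (asm) less_cSUP_iff[OF UNIV_not_empty bdd_above_left_quots[OF e]]) auto
  show "\<forall>\<^sub>F t in at 0. dist (diff_quot e x t) (right_deriv e x) < \<epsilon>"
    unfolding eventually_at
  proof (intro exI[of _ "min r (min (1 / real (Suc n)) (1 / real (Suc m)))"] conjI allI impI ballI)
    fix t :: real assume t: "t \<noteq> 0 \<and> dist t 0 < min r (min (1 / real (Suc n)) (1 / real (Suc m)))"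
    then have tS: "x + t *\<^sub>R e \<in> S" using e r by (auto simp: dist_norm)
    show "dist (diff_quot e x t) (right_deriv e x) < \<epsilon>"
    proof (cases "t > 0")
      case True
      have "left_deriv e x \<le> diff_quot e x t"
        unfolding left_deriv_def using step_quot_le_diff_quot[OF e x tS] t True
        by (intro cSUP_least) auto
      moreover have "diff_quot e x t \<le> step_quot e (1 / real (Suc n)) M x"
        by (rule diff_quot_le_step_quot[OF e x tS]) (use t in auto)
      ultimately show ?thesis using n no_jump by (simp add: jump_def dist_real_def)
    next
      case False
      have "diff_quot e x t \<le> right_deriv e x"
        unfolding right_deriv_def using diff_quot_le_step_quot[OF e x tS] t False
        by (intro cINF_greatest) auto
      moreover have "step_quot e (- 1 / real (Suc m)) (- M) x \<le> diff_quot e x t"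
        by (rule step_quot_le_diff_quot[OF e x tS]) (use t False in auto)
      ultimately show ?thesis using m no_jump by (simp add: jump_def dist_real_def)
    qed
  qed (simp add: r)
qed

lemma step_quot_measurable [measurable]: "step_quot e h b \<in> borel_measurable borel"
proof -
  define U where "U = S \<inter> (\<lambda>x. x + h *\<^sub>R e) -` S"
  have U: "open U" unfolding U_def by (intro open_Int open_S open_translation_vimage)
  have g: "continuous_on S g" by (rule convex_on_continuous[OF open_S convex])
  have "continuous_on U (\<lambda>x. g (x + h *\<^sub>R e))"
    by (rule continuous_on_compose2[OF g]) (auto simp: U_def intro!: continuous_intros)
  moreover have "continuous_on U g" using g by (rule continuous_on_subset) (simp add: U_def)
  ultimately have "continuous_on U (\<lambda>x. diff_quot e x h)"
    unfolding diff_quot_def by (cases "h = 0") (auto intro!: continuous_intros)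
  then have "(\<lambda>x. indicator U x *\<^sub>R diff_quot e x h) \<in> borel_measurable borel"
    using U by (intro borel_measurable_continuous_on_indicator) auto
  moreover have "U \<in> sets borel" using U by simp
  ultimately have "(\<lambda>x. indicator U x *\<^sub>R diff_quot e x h + (1 - indicator U x) * b) \<in> borel_measurable borel"
    by measurable
  also have "(\<lambda>x. indicator U x *\<^sub>R diff_quot e x h + (1 - indicator U x) * b) = step_quot e h b"
    by (auto simp: U_def step_quot_def indicator_def)
  finally show ?thesis .
qed

lemma jump_measurable [measurable]: "norm e = 1 \<Longrightarrow> jump e \<in> borel_measurable borel"
  unfolding jump_def right_deriv_def left_deriv_def
  by (intro borel_measurable_diff borel_measurable_cINF_real borel_measurable_cSUP bdd_above_left_quots)
    simp_all

lemma sum_jump_le: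
  assumes e: "norm e = 1" and T: "finite T" "T \<noteq> {}" and mem: "\<And>t. t \<in> T \<Longrightarrow> z + t *\<^sub>R e \<in> S"
  shows "(\<Sum>t\<in>T. jump e (z + t *\<^sub>R e)) \<le> right_deriv e (z + Max T *\<^sub>R e) - left_deriv e (z + Min T *\<^sub>R e)"
  using T mem
proof (induction T rule: finite_linorder_min_induct)
  case (insert b A)
  show ?case
  proof (cases "A = {}")
    case False
    have IH: "(\<Sum>t\<in>A. jump e (z + t *\<^sub>R e)) \<le> right_deriv e (z + Max A *\<^sub>R e) - left_deriv e (z + Min A *\<^sub>R e)"
      using insert False by simp
    have "Min A \<in> A" "Max A \<in> A" using False insert.hyps(1) by simp_all
    then have less: "b < Min A" "b < Max A" and mem: "z + b *\<^sub>R e \<in> S" "z + Min A *\<^sub>R e \<in> S"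
      using insert by auto
    have "right_deriv e (z + b *\<^sub>R e) \<le> left_deriv e (z + Min A *\<^sub>R e)"
      by (rule right_deriv_le_left_deriv[OF e mem less(1)])
    moreover have "Max (insert b A) = Max A"
      using Max_insert[OF insert.hyps(1) False, of b] less(2) by simp
    moreover have "Min (insert b A) = b"
      using Min_insert[OF insert.hyps(1) False, of b] less(1) by simp
    moreover have "b \<notin> A" using insert.hyps(2) by blast
    ultimately show ?thesis using IH insert.hyps(1) by (simp add: jump_def)
  qed (simp add: jump_def)
qed simp

lemma card_large_jumps_le:
  assumes e: "norm e = 1" and T: "finite T" and \<eta>: "\<eta> > 0"
    and large: "\<And>t. t \<in> T \<Longrightarrow> z + t *\<^sub>R e \<in> S \<and> \<eta> \<le> jump e (z + t *\<^sub>R e)"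
  shows "real (card T) * \<eta> \<le> 2 * M"
proof (cases "T = {}")
  case False
  have "real (card T) * \<eta> \<le> (\<Sum>t\<in>T. jump e (z + t *\<^sub>R e))"
    using sum_mono[of T "\<lambda>_. \<eta>"] large by simp
  also have "\<dots> \<le> right_deriv e (z + Max T *\<^sub>R e) - left_deriv e (z + Min T *\<^sub>R e)"
    using sum_jump_le[OF e T False] large by blast
  also have "\<dots> \<le> 2 * M"
    using right_deriv_bound[OF e] left_deriv_bound[OF e] by (smt (verit))
  finally show ?thesis .
qed (use M_nonneg in simp)

text \<open>Each point lies in at most \<open>2 M / \<eta>\<close> of the \<open>m\<close> translates of the set of large jumps by
  \<open>(j / m) e\<close>, \<open>j < m\<close>, since the jumps on a segment add up to at most \<open>2 M\<close>; so \<open>m\<close> times its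
  measure is bounded independently of \<open>m\<close>.\<close>
lemma large_jumps_null:
  assumes e: "norm e = 1" and \<eta>: "\<eta> > 0"
  shows "{x\<in>S. \<eta> \<le> jump e x} \<in> null_sets lborel"
proof -
  define E where "E = {x\<in>S. \<eta> \<le> jump e x}"
  have [measurable]: "S \<in> sets borel" using open_S by simp
  have [measurable]: "E \<in> sets borel" unfolding E_def using e by measurable
  have "E \<inter> ball 0 (real \<rho>) \<in> null_sets lborel" for \<rho> :: nat
  proof -
    define A where "A = E \<inter> ball 0 (real \<rho>)"
    define B where "B = ball (0::'a) (real \<rho> + 1)"
    have [measurable]: "A \<in> sets borel" "B \<in> sets borel" unfolding A_def B_def by measurable
    have "of_nat m * emeasure lborel A \<le> ennreal (2 * M / \<eta>) * emeasure lborel B" if "m \<ge> 1" for m :: nat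
    proof (rule emeasure_le_by_translates[where c = "\<lambda>j. (real j / real m) *\<^sub>R e"])
      fix x
      define J where "J = {j\<in>{..<m}. x + (real j / real m) *\<^sub>R e \<in> A}"
      have "inj_on (\<lambda>j. real j / real m) J" using that by (intro inj_onI) (auto simp: field_simps)
      then have "card ((\<lambda>j. real j / real m) ` J) = card J" by (rule card_image)
      moreover have "real (card ((\<lambda>j. real j / real m) ` J)) * \<eta> \<le> 2 * M"
        by (rule card_large_jumps_le[OF e _ \<eta>]) (auto simp: J_def A_def E_def)
      ultimately show "real (card J) \<le> 2 * M / \<eta>" using \<eta> by (simp add: field_simps)
    next
      fix x j assume j: "j < m" and "x + (real j / real m) *\<^sub>R e \<in> A"
      then have "norm (x + (real j / real m) *\<^sub>R e) < real \<rho>" by (simp add: A_def)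
      moreover have "norm x \<le> norm (x + (real j / real m) *\<^sub>R e) + real j / real m"
        using norm_triangle_ineq4[of "x + (real j / real m) *\<^sub>R e" "(real j / real m) *\<^sub>R e"] e by simp
      moreover have "real j / real m < 1" using j by simp
      ultimately show "x \<in> B" by (simp add: B_def)
    qed measurable
    moreover have "ennreal (2 * M / \<eta>) * emeasure lborel B < top"
      using emeasure_lborel_ball_finite[of "0::'a" "real \<rho> + 1"] by (simp add: B_def ennreal_mult_less_top)
    ultimately have "emeasure lborel A = 0" by (intro ennreal_eq_0_if_mult_of_nat_le) auto
    then show ?thesis unfolding A_def[symmetric] by (intro null_setsI) auto
  qed
  then have "(\<Union>\<rho>::nat. E \<inter> ball 0 (real \<rho>)) \<in> null_sets lborel" by blast
  also have "(\<Union>\<rho>::nat. E \<inter> ball 0 (real \<rho>)) = E"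
  proof -
    have "\<exists>\<rho>::nat. x \<in> ball 0 (real \<rho>)" for x :: 'a using reals_Archimedean2[of "norm x"] by auto
    then show ?thesis by blast
  qed
  finally show ?thesis unfolding E_def .
qed

theorem differentiable_ae: "\<exists>N\<in>null_sets lborel. \<forall>x\<in>S - N. g differentiable (at x)"
proof
  define N where "N = (\<Union>e\<in>Basis. \<Union>k::nat. {x\<in>S. 1 / real (Suc k) \<le> jump e x})"
  show "N \<in> null_sets lborel"
    unfolding N_def by (intro null_sets_UN' null_sets_UN large_jumps_null) (auto simp: countable_finite)
  show "\<forall>x\<in>S - N. g differentiable (at x)"
  proof
    fix x assume x: "x \<in> S - N"
    have "jump e x = 0" if e: "e \<in> Basis" for e
    proof (rule ccontr)
      assume "jump e x \<noteq> 0"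
      then have "jump e x > 0" using left_deriv_le_right_deriv[of e x] e x by (simp add: jump_def)
      then obtain k where "1 / real (Suc k) < jump e x" by (metis nat_approx_posE)
      then have "x \<in> {x\<in>S. 1 / real (Suc k) \<le> jump e x}" using x by simp
      then have "x \<in> N" unfolding N_def using e by blast
      then show False using x by simp
    qed
    then have "(g has_derivative (\<lambda>v. v \<bullet> (\<Sum>i\<in>Basis. right_deriv i x *\<^sub>R i))) (at x)"
      using x tendsto_diff_quot[of _ x]
      by (intro convex_on_has_derivative_of_partials[OF convex open_S]) (auto simp: diff_quot_def[abs_def])
    then show "g differentiable (at x)" by (rule differentiableI)
  qed
qed

end

section \<open>Slabs swept by lines through a set\<close>

definition slab :: "'a::euclidean_space \<Rightarrow> real \<Rightarrow> 'a set" where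
  "slab e s = {z. 0 \<le> z \<bullet> e \<and> z \<bullet> e < s}"

lemma slab_borel [measurable]: "slab e s \<in> sets borel"
  unfolding slab_def by measurable

lemma nn_integral_slab_lattice:
  fixes u :: "'a::euclidean_space \<Rightarrow> ennreal"
  assumes [measurable]: "u \<in> borel_measurable borel" and e: "norm e = 1" and s: "s > 0"
  shows "(\<integral>\<^sup>+x. u x \<partial>lborel) =
    (\<integral>\<^sup>+z. (\<Sum>n. u (z + (real_of_int (int_decode n) * s) *\<^sub>R e)) * indicator (slab e s) z \<partial>lborel)"
proof -
  define c where "c n = real_of_int (int_decode n) * s" for n
  define B where "B n = {z::'a. c n \<le> z \<bullet> e \<and> z \<bullet> e < c n + s}" for n
  have [measurable]: "B n \<in> sets borel" for n unfolding B_def by measurable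
  have floor: "int_decode n = \<lfloor>z \<bullet> e / s\<rfloor>" if "z \<in> B n" for z n
  proof -
    have "real_of_int (int_decode n) \<le> z \<bullet> e / s" "z \<bullet> e / s < real_of_int (int_decode n) + 1"
      using that s unfolding B_def c_def by (auto simp: field_simps)
    then show ?thesis by linarith
  qed
  have "disjoint_family B"
    unfolding disjoint_family_on_def by (metis disjoint_iff floor int_decode_eq)
  moreover have "(\<Union>n. B n) = UNIV"
  proof -
    have "z \<in> B (int_encode \<lfloor>z \<bullet> e / s\<rfloor>)" for z
    proof -
      have "real_of_int \<lfloor>z \<bullet> e / s\<rfloor> * s \<le> z \<bullet> e" "z \<bullet> e < (real_of_int \<lfloor>z \<bullet> e / s\<rfloor> + 1) * s"
        using s by (simp_all flip: pos_le_divide_eq pos_divide_less_eq)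
      then show ?thesis unfolding B_def c_def by (simp add: algebra_simps)
    qed
    then show ?thesis by blast
  qed
  ultimately have "(\<integral>\<^sup>+x. u x \<partial>lborel) = (\<Sum>n. (\<integral>\<^sup>+x \<in> B n. u x \<partial>lborel))"
    using nn_integral_disjoint_family[of u lborel B] by simp
  also have "\<dots> = (\<Sum>n. (\<integral>\<^sup>+z. u (z + c n *\<^sub>R e) * indicator (slab e s) z \<partial>lborel))"
  proof (intro suminf_cong)
    fix n
    have "e \<bullet> e = 1" using e by (simp add: norm_eq_1)
    then have "indicator (B n) (z + c n *\<^sub>R e) = (indicator (slab e s) z :: ennreal)" for z
      by (auto simp: indicator_def B_def slab_def inner_add_left)
    then show "(\<integral>\<^sup>+x \<in> B n. u x \<partial>lborel) = (\<integral>\<^sup>+z. u (z + c n *\<^sub>R e) * indicator (slab e s) z \<partial>lborel)"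
      using nn_integral_translate[of "\<lambda>x. u x * indicator (B n) x" "c n *\<^sub>R e"] by simp
  qed
  also have "\<dots> = (\<integral>\<^sup>+z. (\<Sum>n. u (z + c n *\<^sub>R e) * indicator (slab e s) z) \<partial>lborel)"
    by (rule nn_integral_suminf[symmetric]) measurable
  also have "\<dots> = (\<integral>\<^sup>+z. (\<Sum>n. u (z + c n *\<^sub>R e)) * indicator (slab e s) z \<partial>lborel)"
    by simp
  finally show ?thesis unfolding c_def .
qed

lemma nn_integral_le_slab:
  fixes u :: "'a::euclidean_space \<Rightarrow> ennreal"
  assumes [measurable]: "u \<in> borel_measurable borel" "A \<in> sets borel" and e: "norm e = 1" and s: "s > 0"
    and lattice_sum: "\<And>z F. finite F \<Longrightarrow> (\<Sum>j\<in>F. u (z + (real_of_int j * s) *\<^sub>R e)) \<le> B * indicator A z"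
  shows "(\<integral>\<^sup>+x. u x \<partial>lborel) \<le> B * emeasure lborel (slab e s \<inter> A)"
proof -
  have "(\<Sum>n. u (z + (real_of_int (int_decode n) * s) *\<^sub>R e)) \<le> B * indicator A z" for z
  proof (rule suminf_le_const)
    fix N
    have "(\<Sum>n<N. u (z + (real_of_int (int_decode n) * s) *\<^sub>R e))
        = (\<Sum>j\<in>int_decode ` {..<N}. u (z + (real_of_int j * s) *\<^sub>R e))"
      by (simp add: sum.reindex inj_int_decode)
    also have "\<dots> \<le> B * indicator A z" by (rule lattice_sum) simp
    finally show "(\<Sum>n<N. u (z + (real_of_int (int_decode n) * s) *\<^sub>R e)) \<le> B * indicator A z" .
  qed simp
  then have "(\<Sum>n. u (z + (real_of_int (int_decode n) * s) *\<^sub>R e)) * indicator (slab e s) z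
      \<le> B * indicator (slab e s \<inter> A) z" for z
    by (cases "z \<in> slab e s") (auto simp: indicator_def)
  then have "(\<integral>\<^sup>+x. u x \<partial>lborel) \<le> (\<integral>\<^sup>+z. B * indicator (slab e s \<inter> A) z \<partial>lborel)"
    unfolding nn_integral_slab_lattice[OF assms(1) e s] by (rule nn_integral_mono)
  also have "\<dots> = B * emeasure lborel (slab e s \<inter> A)"
    by (rule nn_integral_cmult_indicator) measurable
  finally show ?thesis .
qed

lemma emeasure_le_slab:
  fixes W :: "'a::euclidean_space set"
  assumes [measurable]: "W \<in> sets borel" "A \<in> sets borel" and e: "norm e = 1" and s: "s > 0"
    and unique: "\<And>z j k. z + (real_of_int j * s) *\<^sub>R e \<in> W \<Longrightarrow> z + (real_of_int k * s) *\<^sub>R e \<in> W \<Longrightarrow> j = k"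
    and in_A: "\<And>z j. z + (real_of_int j * s) *\<^sub>R e \<in> W \<Longrightarrow> z \<in> A"
  shows "emeasure lborel W \<le> emeasure lborel (slab e s \<inter> A)"
proof -
  have "(\<integral>\<^sup>+x. indicator W x \<partial>lborel) \<le> 1 * emeasure lborel (slab e s \<inter> A)"
  proof (rule nn_integral_le_slab[OF _ _ e s])
    fix z and F :: "int set" assume "finite F"
    define J where "J = {j\<in>F. z + (real_of_int j * s) *\<^sub>R e \<in> W}"
    have "(\<Sum>j\<in>F. indicator W (z + (real_of_int j * s) *\<^sub>R e) :: ennreal) = of_nat (card J)"
      unfolding J_def using \<open>finite F\<close> by (simp add: indicator_def sum.If_cases Int_def)
    also have "\<dots> \<le> 1 * indicator A z"
    proof (cases "J = {}")
      case False
      then obtain j where "j \<in> J" by blast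
      then have "J = {j}" "z \<in> A" using unique in_A unfolding J_def by blast+
      then show ?thesis by simp
    qed simp
    finally show "(\<Sum>j\<in>F. indicator W (z + (real_of_int j * s) *\<^sub>R e) :: ennreal) \<le> 1 * indicator A z" .
  qed simp_all
  then show ?thesis by simp
qed

definition cylinder :: "'a::real_vector set \<Rightarrow> 'a \<Rightarrow> 'a set" where
  "cylinder A v = {z. \<exists>t. z + t *\<^sub>R v \<in> A}"

text \<open>A covering set of diameter \<open>\<rho>\<close> and cost \<open>hausdorff_const (d - 1) * (\<rho> / 2) ^ (d - 1)\<close> will
  be traded for at most \<open>2 R / \<rho>\<close> balls of radius \<open>3 \<rho>\<close>, each of volume at most \<open>(6 \<rho>) ^ d\<close>.\<close>
definition slab_const :: "nat \<Rightarrow> real" where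
  "slab_const d = 2 * 6 ^ d * 2 ^ (d - 1) / hausdorff_const (d - 1)"

lemma hausdorff_const_pos: "hausdorff_const s > 0"
  unfolding hausdorff_const_def by (intro divide_pos_pos) auto

lemma slab_const_pos: "slab_const d > 0"
  unfolding slab_const_def using hausdorff_const_pos by (intro divide_pos_pos) auto

lemma emeasure_cball_le:
  fixes c :: "'a::euclidean_space"
  assumes "r \<ge> 0"
  shows "emeasure lborel (cball c r) \<le> ennreal ((2 * r) ^ DIM('a))"
proof -
  have "cball c r \<subseteq> cbox (c - r *\<^sub>R One) (c + r *\<^sub>R One)"
  proof
    fix y assume "y \<in> cball c r"
    then have "\<bar>(y - c) \<bullet> b\<bar> \<le> r" if "b \<in> Basis" for b
      using Basis_le_norm[OF that, of "y - c"] by (simp add: dist_norm norm_minus_commute)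
    then show "y \<in> cbox (c - r *\<^sub>R One) (c + r *\<^sub>R One)"
      by (auto simp: mem_box inner_diff_left inner_add_left abs_le_iff algebra_simps)
  qed
  then have "emeasure lborel (cball c r) \<le> emeasure lborel (cbox (c - r *\<^sub>R One) (c + r *\<^sub>R One))"
    by (intro emeasure_mono) auto
  also have "\<dots> = ennreal ((2 * r) ^ DIM('a))"
    using assms by (simp add: emeasure_lborel_cbox_eq inner_diff_left inner_add_left algebra_simps)
  finally show ?thesis .
qed

lemma emeasure_balls_on_line_le:
  fixes p :: "'a::euclidean_space"
  assumes \<rho>: "0 < \<rho>" "\<rho> \<le> R"
  shows "emeasure lborel (\<Union>k\<in>{..nat \<lfloor>R / \<rho>\<rfloor>}. cball (p + (real k * \<rho> - p \<bullet> e) *\<^sub>R e) (3 * \<rho>))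
          \<le> ennreal (2 * 6 ^ DIM('a) * R * \<rho> ^ (DIM('a) - 1))"
proof -
  let ?d = "DIM('a)"
  let ?N = "nat \<lfloor>R / \<rho>\<rfloor>"
  have "emeasure lborel (\<Union>k\<in>{..?N}. cball (p + (real k * \<rho> - p \<bullet> e) *\<^sub>R e) (3 * \<rho>))
      \<le> (\<Sum>k\<in>{..?N}. emeasure lborel (cball (p + (real k * \<rho> - p \<bullet> e) *\<^sub>R e) (3 * \<rho>)))"
    by (intro emeasure_subadditive_finite) auto
  also have "\<dots> \<le> (\<Sum>k\<in>{..?N}. ennreal ((2 * (3 * \<rho>)) ^ ?d))"
    by (intro sum_mono emeasure_cball_le) (use \<rho> in auto)
  also have "\<dots> = ennreal (real (?N + 1) * (6 * \<rho>) ^ ?d)"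
    using \<rho> by (simp add: ennreal_of_nat_eq_real_of_nat ennreal_mult)
  also have "\<dots> \<le> ennreal (2 * 6 ^ ?d * R * \<rho> ^ (?d - 1))"
  proof (rule ennreal_leI)
    have "real ?N = real_of_int \<lfloor>R / \<rho>\<rfloor>" "real_of_int \<lfloor>R / \<rho>\<rfloor> \<le> R / \<rho>" "1 \<le> R / \<rho>"
      using \<rho> by simp_all
    then have N: "real (?N + 1) \<le> 2 * (R / \<rho>)" by (simp only: of_nat_add of_nat_1)
    have "(6 * \<rho>) ^ ?d = 6 ^ ?d * \<rho> * \<rho> ^ (?d - 1)"
    proof -
      have "\<rho> ^ ?d = \<rho> * \<rho> ^ (?d - 1)" by (simp flip: power_Suc)
      then show ?thesis by (simp add: power_mult_distrib)
    qed
    then have "real (?N + 1) * (6 * \<rho>) ^ ?d \<le> 2 * (R / \<rho>) * (6 ^ ?d * \<rho> * \<rho> ^ (?d - 1))"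
      using \<rho> by (simp only:) (intro mult_right_mono[OF N], simp)
    also have "\<dots> = 2 * 6 ^ ?d * R * \<rho> ^ (?d - 1)" using \<rho> by (simp add: field_simps)
    finally show "real (?N + 1) * (6 * \<rho>) ^ ?d \<le> 2 * 6 ^ ?d * R * \<rho> ^ (?d - 1)" .
  qed
  finally show ?thesis .
qed

lemma slab_mem_balls_on_line:
  fixes p q z :: "'a::euclidean_space"
  assumes e: "norm e = 1" and \<rho>: "0 < \<rho>" and pq: "dist p q \<le> \<rho>"
    and z: "z = q + t *\<^sub>R e" and slab: "z \<in> slab e R"
  shows "z \<in> (\<Union>k\<in>{..nat \<lfloor>R / \<rho>\<rfloor>}. cball (p + (real k * \<rho> - p \<bullet> e) *\<^sub>R e) (3 * \<rho>))"
proof -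
  have ee: "e \<bullet> e = 1" using e by (simp add: norm_eq_1)
  define \<tau> where "\<tau> = z \<bullet> e"
  have \<tau>: "0 \<le> \<tau>" "\<tau> < R" using slab unfolding slab_def \<tau>_def by auto
  define k where "k = nat \<lfloor>\<tau> / \<rho>\<rfloor>"
  have k: "real k = real_of_int \<lfloor>\<tau> / \<rho>\<rfloor>" unfolding k_def using \<tau> \<rho> by simp
  have kN: "k \<le> nat \<lfloor>R / \<rho>\<rfloor>" unfolding k_def using \<tau> \<rho>
    by (intro nat_mono floor_mono) (simp add: divide_right_mono)
  have "real_of_int \<lfloor>\<tau> / \<rho>\<rfloor> * \<rho> \<le> \<tau>" "\<tau> < (real_of_int \<lfloor>\<tau> / \<rho>\<rfloor> + 1) * \<rho>"
    using \<rho> by (simp_all flip: pos_le_divide_eq pos_divide_less_eq)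
  then have near: "\<bar>\<tau> - real k * \<rho>\<bar> \<le> \<rho>" unfolding k by (simp add: algebra_simps)
  define c where "c = p + (real k * \<rho> - p \<bullet> e) *\<^sub>R e"
  have "z - c = (q - p) + ((\<tau> - real k * \<rho>) - (q - p) \<bullet> e) *\<^sub>R e"
    unfolding c_def \<tau>_def z by (simp add: algebra_simps inner_add_left inner_diff_left ee)
  then have "norm (z - c) \<le> norm (q - p) + \<bar>(\<tau> - real k * \<rho>) - (q - p) \<bullet> e\<bar>"
    using norm_triangle_ineq[of "q - p" "((\<tau> - real k * \<rho>) - (q - p) \<bullet> e) *\<^sub>R e"] e by simp
  also have "\<dots> \<le> norm (q - p) + \<bar>\<tau> - real k * \<rho>\<bar> + \<bar>(q - p) \<bullet> e\<bar>" by linarith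
  also have "\<bar>(q - p) \<bullet> e\<bar> \<le> norm (q - p)" using Cauchy_Schwarz_ineq2[of "q - p" e] e by simp
  finally have "dist c z \<le> 3 * \<rho>" using near pq by (simp add: dist_norm norm_minus_commute)
  then show ?thesis using kN unfolding c_def by auto
qed

lemma exists_radius_power_le:
  fixes D R \<delta> :: real
  assumes "0 \<le> D" "D \<le> R" "0 < R" "0 < \<delta>"
  obtains \<rho> where "D \<le> \<rho>" "0 < \<rho>" "\<rho> \<le> R" "\<rho> ^ n \<le> D ^ n + \<delta>"
proof (cases "D > 0 \<or> n = 0")
  case True
  then show ?thesis using that[of D] that[of R] assms by auto
next
  case False
  define \<rho> where "\<rho> = min R (\<delta> powr (1 / real n))"
  have "\<rho> ^ n \<le> (\<delta> powr (1 / real n)) ^ n" unfolding \<rho>_def using assms(3) by (intro power_mono) auto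
  also have "\<dots> = \<delta>" using False assms(4) by (simp add: powr_realpow[symmetric] powr_powr)
  finally show ?thesis using that[of \<rho>] False assms by (auto simp: \<rho>_def zero_power)
qed

lemma hausdorff_measure_cover:
  assumes "hausdorff_measure s A < top" "0 < \<delta>" "0 < \<epsilon>"
  obtains E where "A \<subseteq> (\<Union>i. E i)" "\<And>i. bounded (E i)" "\<And>i. diameter (E i) \<le> \<delta>"
    "(\<Sum>i. hcost s (E i)) < hausdorff_measure s A + ennreal \<epsilon>"
proof -
  have "hausdorff_pre s \<delta> A \<le> hausdorff_measure s A"
    unfolding hausdorff_measure_def by (rule SUP_upper) (use assms(2) in simp)
  also have "\<dots> < hausdorff_measure s A + ennreal \<epsilon>"
    using assms(1,3) by (cases "hausdorff_measure s A") (auto simp: ennreal_less_iff simp flip: ennreal_plus)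
  finally show ?thesis using that unfolding hausdorff_pre_def INF_less_iff by blast
qed

lemma slab_cylinder_subset_balls:
  fixes E :: "'a::euclidean_space set"
  assumes e: "norm e = 1" and E: "bounded E" "p \<in> E" and \<rho>: "diameter E \<le> \<rho>" "0 < \<rho>"
  shows "slab e R \<inter> cylinder E e \<subseteq> (\<Union>k\<in>{..nat \<lfloor>R / \<rho>\<rfloor>}. cball (p + (real k * \<rho> - p \<bullet> e) *\<^sub>R e) (3 * \<rho>))"
proof
  fix z assume z: "z \<in> slab e R \<inter> cylinder E e"
  then obtain t where t: "z + t *\<^sub>R e \<in> E" by (auto simp: cylinder_def)
  then have "dist p (z + t *\<^sub>R e) \<le> \<rho>" using diameter_bounded_bound[OF E t] \<rho>(1) by linarith
  then show "z \<in> (\<Union>k\<in>{..nat \<lfloor>R / \<rho>\<rfloor>}. cball (p + (real k * \<rho> - p \<bullet> e) *\<^sub>R e) (3 * \<rho>))"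
    using z by (intro slab_mem_balls_on_line[OF e \<rho>(2), where q = "z + t *\<^sub>R e" and t = "- t"]) auto
qed

text \<open>A covering set of diameter \<open>0\<close> still needs balls of positive radius; the radii
  \<open>(\<epsilon> / 2 ^ i) powr (1 / (d - 1))\<close> chosen for such sets account for the error term.\<close>
lemma emeasure_slab_cylinder_le_cover:
  fixes A F :: "'a::euclidean_space set" and E :: "nat \<Rightarrow> 'a set"
  assumes e: "norm e = 1" and R: "R > 0" and A: "A \<subseteq> cylinder F e"
    and E: "F \<subseteq> (\<Union>i. E i)" "\<And>i. bounded (E i)" "\<And>i. diameter (E i) \<le> R" and \<epsilon>: "\<epsilon> > 0"
  shows "emeasure lborel (slab e R \<inter> A)
    \<le> ennreal (slab_const DIM('a) * R) * (\<Sum>i. hcost (DIM('a) - 1) (E i)) + ennreal (2 * 6 ^ DIM('a) * R * \<epsilon> * 2)"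
proof -
  let ?d = "DIM('a)"
  define K where "K = slab_const ?d * R"
  define B where "B = 2 * 6 ^ ?d * R"
  have K: "K > 0" and B: "B > 0" unfolding K_def B_def using slab_const_pos R by simp_all
  have U: "\<exists>U. U \<in> sets borel \<and> slab e R \<inter> cylinder (E i) e \<subseteq> U
      \<and> emeasure lborel U \<le> ennreal K * hcost (?d - 1) (E i) + ennreal (B * \<epsilon> * (1/2) ^ i)" for i
  proof (cases "E i = {}")
    case False
    then obtain p where p: "p \<in> E i" by blast
    define D where "D = diameter (E i)"
    have D: "0 \<le> D" "D \<le> R" using E(2,3) by (simp_all add: D_def diameter_ge_0)
    obtain \<rho> where \<rho>: "D \<le> \<rho>" "0 < \<rho>" "\<rho> \<le> R" "\<rho> ^ (?d - 1) \<le> D ^ (?d - 1) + \<epsilon> * (1/2) ^ i"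
      using exists_radius_power_le[OF D R, of "\<epsilon> * (1/2) ^ i"] \<epsilon> by auto
    have "ennreal (2 * 6 ^ ?d * R * \<rho> ^ (?d - 1)) \<le> ennreal (B * D ^ (?d - 1) + B * \<epsilon> * (1/2) ^ i)"
      using mult_left_mono[OF \<rho>(4), of B] B by (intro ennreal_leI) (simp add: B_def algebra_simps)
    also have "B * D ^ (?d - 1) = K * (hausdorff_const (?d - 1) * (D / 2) ^ (?d - 1))"
      using hausdorff_const_pos[of "?d - 1"] by (simp add: K_def B_def slab_const_def power_divide field_simps)
    also have "ennreal (K * (hausdorff_const (?d - 1) * (D / 2) ^ (?d - 1)) + B * \<epsilon> * (1/2) ^ i)
        = ennreal K * hcost (?d - 1) (E i) + ennreal (B * \<epsilon> * (1/2) ^ i)"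
      using False K B D(1) \<epsilon> hausdorff_const_pos[of "?d - 1"]
      by (simp add: hcost_def D_def ennreal_mult ennreal_plus)
    finally show ?thesis
      using slab_cylinder_subset_balls[OF e E(2) p _ \<rho>(2), of R] \<rho>(1) emeasure_balls_on_line_le[OF \<rho>(2,3), of p e]
      by (intro exI[of _ "\<Union>k\<in>{..nat \<lfloor>R / \<rho>\<rfloor>}. cball (p + (real k * \<rho> - p \<bullet> e) *\<^sub>R e) (3 * \<rho>)"])
        (auto simp: D_def)
  qed (auto simp: cylinder_def)
  then obtain U where U_sets: "\<And>i. U i \<in> sets borel" and U_cover: "\<And>i. slab e R \<inter> cylinder (E i) e \<subseteq> U i"
    and U_le: "\<And>i. emeasure lborel (U i) \<le> ennreal K * hcost (?d - 1) (E i) + ennreal (B * \<epsilon> * (1/2) ^ i)"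
    by metis
  have "slab e R \<inter> A \<subseteq> (\<Union>i. U i)"
    using A E(1) U_cover by (fastforce simp: cylinder_def)
  then have "emeasure lborel (slab e R \<inter> A) \<le> emeasure lborel (\<Union>i. U i)"
    using U_sets by (intro emeasure_mono) auto
  also have "\<dots> \<le> (\<Sum>i. emeasure lborel (U i))"
    using U_sets by (intro emeasure_subadditive_countably) auto
  also have "\<dots> \<le> (\<Sum>i. ennreal K * hcost (?d - 1) (E i) + ennreal (B * \<epsilon> * (1/2) ^ i))"
    using U_le by (intro suminf_le) auto
  also have "\<dots> = ennreal K * (\<Sum>i. hcost (?d - 1) (E i)) + ennreal (B * \<epsilon> * 2)"
  proof -
    have "(\<lambda>i. B * \<epsilon> * (1/2) ^ i) sums (B * \<epsilon> * 2)"
      using sums_mult[OF geometric_sums[of "1/2::real"], of "B * \<epsilon>"] by simp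
    then have "(\<Sum>i. ennreal (B * \<epsilon> * (1/2) ^ i)) = ennreal (B * \<epsilon> * 2)"
      using B \<epsilon> by (intro suminf_ennreal_eq) auto
    then show ?thesis by (simp add: suminf_add[symmetric] ennreal_suminf_cmult)
  qed
  finally show ?thesis by (simp add: K_def B_def)
qed

lemma emeasure_slab_cylinder_le:
  fixes A F :: "'a::euclidean_space set"
  assumes e: "norm e = 1" and R: "R > 0" and A: "A \<subseteq> cylinder F e"
  shows "emeasure lborel (slab e R \<inter> A) \<le> ennreal (slab_const DIM('a) * R) * hausdorff_measure (DIM('a) - 1) F"
proof (rule ennreal_le_epsilon)
  let ?d = "DIM('a)"
  let ?H = "hausdorff_measure (?d - 1) F"
  define K where "K = slab_const ?d * R"
  define B where "B = 2 * 6 ^ ?d * R"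
  have K: "K > 0" and B: "B > 0" unfolding K_def B_def using slab_const_pos R by simp_all
  fix \<epsilon>0 :: real assume fin: "ennreal K * ?H < top" and \<epsilon>0: "0 < \<epsilon>0"
  then have "?H < top" using K by (auto simp: ennreal_mult_less_top top_unique)
  define \<epsilon> where "\<epsilon> = \<epsilon>0 / (K + 2 * B)"
  have \<epsilon>: "\<epsilon> > 0" and \<epsilon>0_eq: "(K + 2 * B) * \<epsilon> = \<epsilon>0" using K B \<epsilon>0 by (simp_all add: \<epsilon>_def)
  obtain E where E: "F \<subseteq> (\<Union>i. E i)" "\<And>i. bounded (E i)" "\<And>i. diameter (E i) \<le> R"
    and E_cost: "(\<Sum>i. hcost (?d - 1) (E i)) < ?H + ennreal \<epsilon>"
    using hausdorff_measure_cover[OF \<open>?H < top\<close> R \<epsilon>] by blast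
  have "emeasure lborel (slab e R \<inter> A) \<le> ennreal K * (\<Sum>i. hcost (?d - 1) (E i)) + ennreal (B * \<epsilon> * 2)"
    using emeasure_slab_cylinder_le_cover[OF e R A E \<epsilon>] by (simp add: K_def B_def)
  also have "\<dots> \<le> ennreal K * (?H + ennreal \<epsilon>) + ennreal (B * \<epsilon> * 2)"
    using E_cost by (intro add_right_mono mult_left_mono) auto
  also have "\<dots> = ennreal K * ?H + ennreal \<epsilon>0"
    using K B \<epsilon> \<epsilon>0_eq[symmetric]
    by (simp add: distrib_left add.assoc ennreal_mult[symmetric] ennreal_plus[symmetric] algebra_simps
        del: ennreal_plus)
  finally show "emeasure lborel (slab e R \<inter> A) \<le> ennreal (slab_const ?d * R) * ?H + ennreal \<epsilon>0"
    unfolding K_def .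
qed

section \<open>Open convex sets\<close>

text \<open>\<open>w + t v\<close> is a convex combination of a far point of the line and a point close to \<open>w\<close>.\<close>
lemma open_convex_contains_line_translate:
  fixes S :: "'a::real_normed_vector set"
  assumes S: "open S" "convex S" and line: "\<And>t. z + t *\<^sub>R v \<in> S" and w: "w \<in> S"
  shows "w + t *\<^sub>R v \<in> S"
proof -
  obtain r where r: "r > 0" "ball w r \<subseteq> S" using S(1) w open_contains_ball by blast
  define \<theta> where "\<theta> = r / (2 * (norm (w - z) + r))"
  have pos: "0 < norm (w - z) + r" using r by (simp add: add_nonneg_pos)
  then have \<theta>: "0 < \<theta>" "\<theta> \<le> 1/2" using r by (auto simp: \<theta>_def field_simps)
  define w' where "w' = (1 / (1 - \<theta>)) *\<^sub>R (w - \<theta> *\<^sub>R z)"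
  have "(1 - \<theta>) *\<^sub>R w' = w - \<theta> *\<^sub>R z" using \<theta> by (simp add: w'_def)
  then have "(1 - \<theta>) *\<^sub>R (w' - w) = \<theta> *\<^sub>R (w - z)" by (simp add: algebra_simps)
  from arg_cong[OF this, of norm] have "(1 - \<theta>) * norm (w' - w) = \<theta> * norm (w - z)" using \<theta> by simp
  moreover have "(1/2) * norm (w' - w) \<le> (1 - \<theta>) * norm (w' - w)" using \<theta> by (intro mult_right_mono) auto
  ultimately have "norm (w' - w) \<le> 2 * \<theta> * norm (w - z)" by linarith
  also have "\<dots> < r" using r pos by (simp add: \<theta>_def field_simps)
  finally have "w' \<in> S" using r by (auto simp: dist_norm norm_minus_commute)
  then have "(1 - \<theta>) *\<^sub>R w' + \<theta> *\<^sub>R (z + (t / \<theta>) *\<^sub>R v) \<in> S"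
    using convexD_alt[OF S(2) _ line, of w' \<theta> "t / \<theta>"] \<theta> by simp
  moreover have "(1 - \<theta>) *\<^sub>R w' + \<theta> *\<^sub>R (z + (t / \<theta>) *\<^sub>R v) = w + t *\<^sub>R v"
    using \<theta> by (simp add: w'_def scaleR_add_right)
  ultimately show ?thesis by simp
qed

lemma translation_invariant_Basis_imp_UNIV:
  fixes S :: "'a::euclidean_space set"
  assumes "S \<noteq> {}" and inv: "\<And>i w t. i \<in> Basis \<Longrightarrow> w \<in> S \<Longrightarrow> w + t *\<^sub>R i \<in> S"
  shows "S = UNIV"
proof -
  obtain w where w: "w \<in> S" using assms(1) by blast
  have sums: "F \<subseteq> Basis \<Longrightarrow> w + (\<Sum>i\<in>F. c i *\<^sub>R i) \<in> S" if "finite F" for F c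
    using that
  proof (induction F rule: finite_induct)
    case (insert i F)
    then have "(w + (\<Sum>i\<in>F. c i *\<^sub>R i)) + c i *\<^sub>R i \<in> S" using inv by simp
    then show ?case using insert.hyps by (simp add: add_ac)
  qed (simp add: w)
  have "y \<in> S" for y
    using sums[of Basis "\<lambda>i. (y - w) \<bullet> i"] by (simp add: euclidean_representation)
  then show ?thesis by blast
qed

lemma translation_invariant_uminus:
  fixes S :: "'a::real_vector set"
  shows "(\<forall>w\<in>S. \<forall>t. w + t *\<^sub>R (- v) \<in> S) \<longleftrightarrow> (\<forall>w\<in>S. \<forall>t. w + t *\<^sub>R v \<in> S)"
proof (intro iffI ballI allI)
  fix w t assume "\<forall>w\<in>S. \<forall>t. w + t *\<^sub>R (- v) \<in> S" "w \<in> S"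
  then have "w + (- t) *\<^sub>R (- v) \<in> S" by blast
  then show "w + t *\<^sub>R v \<in> S" by simp
next
  fix w t assume "\<forall>w\<in>S. \<forall>t. w + t *\<^sub>R v \<in> S" "w \<in> S"
  then have "w + (- t) *\<^sub>R v \<in> S" by blast
  then show "w + t *\<^sub>R (- v) \<in> S" by simp
qed

lemma open_cylinder: "open A \<Longrightarrow> open (cylinder A v)"
  for A :: "'a::real_normed_vector set"
proof -
  assume "open A"
  have "cylinder A v = (\<Union>t. (\<lambda>z. z + t *\<^sub>R v) -` A)" by (auto simp: cylinder_def)
  then show ?thesis using \<open>open A\<close> by (simp add: open_UN open_translation_vimage)
qed

lemma cylinder_subset_cylinder_frontier:
  fixes S :: "'a::real_normed_vector set"
  assumes S: "open S" "convex S" and not_inv: "\<not> (\<forall>w\<in>S. \<forall>t. w + t *\<^sub>R v \<in> S)"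
  shows "cylinder S v \<subseteq> cylinder (frontier S) v"
proof
  fix z assume "z \<in> cylinder S v"
  define L where "L = range (\<lambda>t::real. z + t *\<^sub>R v)"
  have "connected L" unfolding L_def by (intro connected_continuous_image) (auto intro!: continuous_intros)
  moreover have "L \<inter> S \<noteq> {}" using \<open>z \<in> cylinder S v\<close> by (auto simp: L_def cylinder_def)
  moreover have "L - S \<noteq> {}"
  proof
    assume "L - S = {}"
    then have "z + t *\<^sub>R v \<in> S" for t by (auto simp: L_def)
    then show False using open_convex_contains_line_translate[OF S] not_inv by blast
  qed
  ultimately have "L \<inter> frontier S \<noteq> {}" by (rule connected_Int_frontier)
  then show "z \<in> cylinder (frontier S) v" by (auto simp: L_def cylinder_def)
qed

lemma emeasure_slab_cylinder_frontier_le: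
  fixes S :: "'a::euclidean_space set"
  assumes S: "open S" "convex S" and not_inv: "\<not> (\<forall>w\<in>S. \<forall>t. w + t *\<^sub>R v \<in> S)"
    and v: "norm v = 1" and R: "R > 0"
  shows "emeasure lborel (slab v R \<inter> cylinder S v)
    \<le> ennreal (slab_const DIM('a) * R) * hausdorff_measure (DIM('a) - 1) (frontier S)"
  by (intro emeasure_slab_cylinder_le[OF v R] cylinder_subset_cylinder_frontier[OF S not_inv])

lemma ball_subset_slab_cylinder:
  fixes S :: "'a::euclidean_space set"
  assumes j: "j \<in> Basis" and r: "r > 0" "ball w r \<subseteq> S"
  shows "ball (w + (1/2 - w \<bullet> j) *\<^sub>R j) (min r (1/2)) \<subseteq> slab j 1 \<inter> cylinder S j"
proof
  define c where "c = w + (1/2 - w \<bullet> j) *\<^sub>R j"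
  fix y assume y: "y \<in> ball (w + (1/2 - w \<bullet> j) *\<^sub>R j) (min r (1/2))"
  then have "\<bar>(y - c) \<bullet> j\<bar> < 1/2"
    using Basis_le_norm[OF j, of "y - c"] by (simp add: c_def dist_norm norm_minus_commute)
  moreover have "(y - c) \<bullet> j = y \<bullet> j - 1/2" using j by (simp add: c_def inner_diff_left inner_add_left)
  ultimately have "0 \<le> y \<bullet> j \<and> y \<bullet> j < 1" by (simp only: abs_less_iff) linarith
  then have "y \<in> slab j 1" by (simp add: slab_def)
  moreover have "y + (- (1/2 - w \<bullet> j)) *\<^sub>R j \<in> ball w r"
    using y by (auto simp: dist_norm algebra_simps)
  ultimately show "y \<in> slab j 1 \<inter> cylinder S j" using r(2) by (auto simp: cylinder_def)
qed

lemma hausdorff_frontier_pos: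
  fixes S :: "'a::euclidean_space set"
  assumes S: "open S" "convex S" "S \<noteq> {}" "S \<noteq> UNIV"
  shows "hausdorff_measure (DIM('a) - 1) (frontier S) > 0"
proof -
  obtain j where j: "j \<in> Basis" and not_inv: "\<not> (\<forall>w\<in>S. \<forall>t. w + t *\<^sub>R j \<in> S)"
    using translation_invariant_Basis_imp_UNIV[OF S(3)] S(4) by blast
  obtain w r where r: "r > 0" "ball w r \<subseteq> S" using S(1,3) open_contains_ball by blast
  have "0 < emeasure lborel (ball (w + (1/2 - w \<bullet> j) *\<^sub>R j) (min r (1/2)))"
    using r by (simp add: emeasure_ball)
  also have "\<dots> \<le> emeasure lborel (slab j 1 \<inter> cylinder S j)"
    using ball_subset_slab_cylinder[OF j r] open_cylinder[OF S(1)] by (intro emeasure_mono) auto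
  also have "\<dots> \<le> ennreal (slab_const DIM('a) * 1) * hausdorff_measure (DIM('a) - 1) (frontier S)"
    using j by (intro emeasure_slab_cylinder_frontier_le[OF S(1,2) not_inv]) auto
  finally show ?thesis by (auto simp: zero_less_iff_neq_zero)
qed

lemma emeasure_eq_top_if_disjoint_balls:
  fixes A :: "'a::euclidean_space set"
  assumes A: "A \<in> sets borel" and v: "norm v = 1" and \<rho>: "\<rho> > 0"
    and balls: "\<And>k::nat. ball (c + (2 * real k * \<rho>) *\<^sub>R v) \<rho> \<subseteq> A"
  shows "emeasure lborel A = top"
proof (rule ccontr)
  assume "emeasure lborel A \<noteq> top"
  define ctr where "ctr k = c + (2 * real k * \<rho>) *\<^sub>R v" for k :: nat
  have disj: "disjoint_family (\<lambda>k. ball (ctr k) \<rho>)"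
    unfolding disjoint_family_on_def
  proof (intro ballI impI equals0I)
    fix k l :: nat and y assume "k \<noteq> l" and y: "y \<in> ball (ctr k) \<rho> \<inter> ball (ctr l) \<rho>"
    have "ctr k - ctr l = (2 * \<rho> * (real k - real l)) *\<^sub>R v" by (simp add: ctr_def algebra_simps)
    then have "dist (ctr k) (ctr l) = 2 * \<rho> * \<bar>real k - real l\<bar>" using v \<rho> by (simp add: dist_norm abs_mult)
    also have "\<dots> \<ge> 2 * \<rho>" using \<rho> \<open>k \<noteq> l\<close> by (simp add: mult_le_cancel_left1)
    finally show False using y dist_triangle[of "ctr k" "ctr l" y] by (simp add: dist_commute)
  qed
  have "of_nat m * emeasure lborel (ball (0::'a) \<rho>) \<le> emeasure lborel A" for m
  proof -
    have "of_nat m * emeasure lborel (ball (0::'a) \<rho>) = (\<Sum>k<m. emeasure lborel (ball (ctr k) \<rho>))"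
      using \<rho> by (simp add: emeasure_ball)
    also have "\<dots> = emeasure lborel (\<Union>k<m. ball (ctr k) \<rho>)"
      using disj by (intro sum_emeasure) (auto simp: disjoint_family_on_def)
    also have "\<dots> \<le> emeasure lborel A" using balls A by (intro emeasure_mono) (auto simp: ctr_def)
    finally show ?thesis .
  qed
  then have "emeasure lborel (ball (0::'a) \<rho>) = 0"
    using \<open>emeasure lborel A \<noteq> top\<close> by (intro ennreal_eq_0_if_mult_of_nat_le) (auto simp: less_top)
  moreover have "0 < emeasure lborel (ball (0::'a) \<rho>)" using \<rho> by (simp add: emeasure_ball)
  ultimately show False by simp
qed

lemma hausdorff_frontier_eq_top:
  fixes S :: "'a::euclidean_space set"
  assumes S: "open S" "convex S" "S \<noteq> {}" "S \<noteq> UNIV" and i: "i \<in> Basis"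
    and inv: "\<And>w t. w \<in> S \<Longrightarrow> w + t *\<^sub>R i \<in> S"
  shows "hausdorff_measure (DIM('a) - 1) (frontier S) = top"
proof -
  obtain j where j: "j \<in> Basis" and not_inv: "\<not> (\<forall>w\<in>S. \<forall>t. w + t *\<^sub>R j \<in> S)"
    using translation_invariant_Basis_imp_UNIV[OF S(3)] S(4) by blast
  have ij: "i \<bullet> j = 0" using i j inv not_inv by (auto simp: inner_Basis)
  obtain w r where r: "r > 0" "ball w r \<subseteq> S" using S(1,3) open_contains_ball by blast
  have "ball (w + (1/2 - w \<bullet> j) *\<^sub>R j + (2 * real k * min r (1/2)) *\<^sub>R i) (min r (1/2))
      \<subseteq> slab j 1 \<inter> cylinder S j" for k :: nat
  proof -
    have "ball (w + (2 * real k * min r (1/2)) *\<^sub>R i) r \<subseteq> S"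
    proof
      fix y assume "y \<in> ball (w + (2 * real k * min r (1/2)) *\<^sub>R i) r"
      then have "y + (- (2 * real k * min r (1/2))) *\<^sub>R i \<in> S" using r(2) by (auto simp: dist_norm algebra_simps)
      from inv[OF this, of "2 * real k * min r (1/2)"] show "y \<in> S" by simp
    qed
    from ball_subset_slab_cylinder[OF j r(1) this] show ?thesis
      using ij by (simp add: inner_add_left algebra_simps)
  qed
  then have "emeasure lborel (slab j 1 \<inter> cylinder S j) = top"
    using open_cylinder[OF S(1)] i r(1)
    by (intro emeasure_eq_top_if_disjoint_balls[where c = "w + (1/2 - w \<bullet> j) *\<^sub>R j" and v = i
          and \<rho> = "min r (1/2)"]) auto
  then show ?thesis
    using emeasure_slab_cylinder_frontier_le[OF S(1,2) not_inv, of 1] j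
    by (auto simp: top_unique ennreal_mult_eq_top_iff)
qed

lemma emeasure_boundary_layer_le:
  fixes S :: "'a::euclidean_space set"
  assumes S: "open S" "convex S" and not_inv: "\<not> (\<forall>w\<in>S. \<forall>t. w + t *\<^sub>R v \<in> S)"
    and v: "norm v = 1" and s: "s > 0"
  shows "emeasure lborel {x\<in>S. x + s *\<^sub>R v \<notin> S}
    \<le> ennreal (slab_const DIM('a) * s) * hausdorff_measure (DIM('a) - 1) (frontier S)"
proof -
  define W where "W = {x\<in>S. x + s *\<^sub>R v \<notin> S}"
  have "W = S - (\<lambda>x. x + s *\<^sub>R v) -` S" by (auto simp: W_def)
  then have "W \<in> sets borel" using S(1) open_translation_vimage[OF S(1)] by simp
  then have "emeasure lborel W \<le> emeasure lborel (slab v s \<inter> cylinder S v)"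
  proof (rule emeasure_le_slab[OF _ _ v s])
    fix z j k assume j: "z + (real_of_int j * s) *\<^sub>R v \<in> W" and k: "z + (real_of_int k * s) *\<^sub>R v \<in> W"
    have False if "j' < k'" "z + (real_of_int j' * s) *\<^sub>R v \<in> W" "z + (real_of_int k' * s) *\<^sub>R v \<in> W"
      for j' k'
    proof -
      have "real_of_int (j' + 1) \<le> real_of_int k'" using that(1) by (simp only: of_int_le_iff)
      then have le: "real_of_int j' * s + s \<le> real_of_int k' * s"
        using s mult_right_mono[of "real_of_int (j' + 1)" "real_of_int k'" s] by (simp add: algebra_simps)
      have in_S: "z + (real_of_int j' * s) *\<^sub>R v \<in> S" "z + (real_of_int k' * s) *\<^sub>R v \<in> S"
        using that(2,3) by (simp_all add: W_def)
      have "z + (real_of_int j' * s + s) *\<^sub>R v \<in> S"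
        by (rule convex_line_between[OF S(2) in_S]) (use s le in auto)
      then show False using that(2) by (simp add: W_def algebra_simps)
    qed
    then show "j = k" using j k by (meson linorder_neqE)
  qed (use open_cylinder[OF S(1)] in \<open>auto simp: W_def cylinder_def\<close>)
  also have "\<dots> \<le> ennreal (slab_const DIM('a) * s) * hausdorff_measure (DIM('a) - 1) (frontier S)"
    by (rule emeasure_slab_cylinder_frontier_le[OF S not_inv v s])
  finally show ?thesis unfolding W_def .
qed

lemma diameter_pos_open:
  fixes S :: "'a::euclidean_space set"
  assumes "open S" "S \<noteq> {}" "bounded S"
  shows "diameter S > 0"
proof -
  obtain w r where "r > 0" "ball w r \<subseteq> S" using assms(1,2) open_contains_ball by blast
  then have "2 * r \<le> diameter S" using diameter_subset[OF _ assms(3), of "ball w r"] by simp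
  then show ?thesis using \<open>r > 0\<close> by simp
qed

text \<open>For \<open>s > diameter S\<close> the boundary layer of width \<open>s\<close> is all of \<open>S\<close>.\<close>
lemma emeasure_le_diameter_hausdorff:
  fixes S :: "'a::euclidean_space set"
  assumes S: "open S" "convex S" "S \<noteq> {}" "bounded S" and not_inv: "\<not> (\<forall>w\<in>S. \<forall>t. w + t *\<^sub>R v \<in> S)"
    and v: "norm v = 1"
  shows "emeasure lborel S
    \<le> ennreal (slab_const DIM('a) * (2 * diameter S)) * hausdorff_measure (DIM('a) - 1) (frontier S)"
proof -
  have D: "diameter S > 0" by (rule diameter_pos_open[OF S(1,3,4)])
  have "x + (2 * diameter S) *\<^sub>R v \<notin> S" if "x \<in> S" for x
    using diameter_bounded_bound[OF S(4) that, of "x + (2 * diameter S) *\<^sub>R v"] D v by (auto simp: dist_norm)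
  then have "S = {x\<in>S. x + (2 * diameter S) *\<^sub>R v \<notin> S}" by blast
  also have "emeasure lborel \<dots>
      \<le> ennreal (slab_const DIM('a) * (2 * diameter S)) * hausdorff_measure (DIM('a) - 1) (frontier S)"
    using D by (intro emeasure_boundary_layer_le[OF S(1,2) not_inv v]) simp
  finally show ?thesis .
qed

section \<open>Second differences along the coordinate axes\<close>

definition axis_core :: "'a::euclidean_space set \<Rightarrow> real \<Rightarrow> 'a set" where
  "axis_core S R = {x\<in>S. \<forall>i\<in>Basis. x + (2*R) *\<^sub>R i \<in> S \<and> x + (-2*R) *\<^sub>R i \<in> S}"

lemma axis_core_eq:
  "axis_core S R = S \<inter> (\<Inter>i\<in>Basis. (\<lambda>x. x + (2*R) *\<^sub>R i) -` S \<inter> (\<lambda>x. x + (-2*R) *\<^sub>R i) -` S)"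
  by (auto simp: axis_core_def)

lemma open_axis_core: "open S \<Longrightarrow> open (axis_core S R)"
  unfolding axis_core_eq by (intro open_Int open_INT finite_Basis ballI open_translation_vimage)

lemma convex_translation_vimage: "convex S \<Longrightarrow> convex ((\<lambda>x. x + c) -` S)"
  for S :: "'a::real_vector set"
proof -
  assume "convex S"
  moreover have "(\<lambda>x. x + c) -` S = (\<lambda>x. - c + x) ` S" by (auto intro: image_eqI[where x = "_ + c"])
  ultimately show ?thesis by (simp add: convex_translation)
qed

lemma convex_axis_core: "convex S \<Longrightarrow> convex (axis_core S R)"
  unfolding axis_core_eq by (intro convex_Int convex_INT ballI convex_translation_vimage)

lemma sum_shift3_telescope:
  fixes h :: "int \<Rightarrow> real"
  assumes "a \<le> b"
  shows "(\<Sum>j\<in>{a..b}. h (j + 1) - h (j - 2)) = h (b + 1) + h b + h (b - 1) - h a - h (a - 1) - h (a - 2)"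
  using assms
proof (induction b rule: int_ge_induct)
  case (step b)
  have "{a..b + 1} = insert (b + 1) {a..b}" using step.hyps by auto
  then show ?case using step by simp
qed simp

lemma axis_core_line_mem:
  assumes "convex S" "x \<in> axis_core S R" "i \<in> Basis" "-2*R \<le> c" "c \<le> 2*R"
  shows "x + c *\<^sub>R i \<in> S"
  using assms convex_line_between[OF assms(1), of x "-2*R" i "2*R" c] by (auto simp: axis_core_def)

text \<open>The second differences telescope, leaving six first differences of \<open>g\<close> over distance \<open>R\<close>.\<close>
lemma sum_second_diff_lattice_le:
  fixes g :: "'a::real_normed_vector \<Rightarrow> real"
  assumes lip: "M-lipschitz_on S g" and R: "R > 0" and v: "norm v = 1" and ab: "a \<le> b"
    and in_S: "\<And>l. a - 2 \<le> l \<Longrightarrow> l \<le> b + 2 \<Longrightarrow> z + (real_of_int l * R) *\<^sub>R v \<in> S"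
  shows "(\<Sum>j\<in>{a..b}. second_diff g R v (z + (real_of_int j * R) *\<^sub>R v)) \<le> 6 * M * R"
proof -
  define p where "p l = z + (real_of_int l * R) *\<^sub>R v" for l :: int
  define h where "h l = g (p (l + 1)) - g (p l)" for l
  have h: "\<bar>h l\<bar> \<le> M * R" if "a - 2 \<le> l" "l \<le> b + 1" for l
  proof -
    have "p (l + 1) \<in> S" "p l \<in> S" using in_S[of "l + 1"] in_S[of l] that by (simp_all add: p_def)
    then have "\<bar>h l\<bar> \<le> M * dist (p (l + 1)) (p l)"
      unfolding h_def using lipschitz_onD[OF lip] by (simp add: dist_real_def)
    also have "dist (p (l + 1)) (p l) = R" unfolding p_def using R v by (simp add: dist_norm algebra_simps)
    finally show ?thesis .
  qed
  have "second_diff g R v (p j) = h (j + 1) - h (j - 2)" for j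
  proof -
    have "p j + (2*R) *\<^sub>R v = p (j + 2)" "p j + R *\<^sub>R v = p (j + 1)"
      "p j + (-R) *\<^sub>R v = p (j - 1)" "p j + (-2*R) *\<^sub>R v = p (j - 2)"
      unfolding p_def by (simp_all add: algebra_simps)
    then show ?thesis by (simp add: second_diff_def h_def add.commute)
  qed
  then have "(\<Sum>j\<in>{a..b}. second_diff g R v (p j)) = (\<Sum>j\<in>{a..b}. h (j + 1) - h (j - 2))" by simp
  also have "\<dots> = h (b + 1) + h b + h (b - 1) - h a - h (a - 1) - h (a - 2)"
    by (rule sum_shift3_telescope[OF ab])
  also have "\<dots> \<le> 6 * (M * R)"
    using h[of "b + 1"] h[of b] h[of "b - 1"] h[of a] h[of "a - 1"] h[of "a - 2"] ab
    by (simp add: abs_le_iff)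
  finally show ?thesis by (simp add: p_def)
qed

lemma sum_second_diff_on_line_le:
  fixes g :: "'a::euclidean_space \<Rightarrow> real"
  assumes cv: "convex_on S g" and lip: "M-lipschitz_on S g" and R: "R > 0" and i: "i \<in> Basis"
    and F: "finite F"
  shows "(\<Sum>j\<in>F. indicator (axis_core S R) (z + (real_of_int j * R) *\<^sub>R i)
      * second_diff g R i (z + (real_of_int j * R) *\<^sub>R i)) \<le> 6 * M * R"
proof -
  have S: "convex S" using cv by (rule convex_on_imp_convex)
  define p where "p l = z + (real_of_int l * R) *\<^sub>R i" for l :: int
  define J where "J = {j\<in>F. p j \<in> axis_core S R}"
  have "(\<Sum>j\<in>F. indicator (axis_core S R) (p j) * second_diff g R i (p j)) = (\<Sum>j\<in>J. second_diff g R i (p j))"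
    unfolding J_def using F by (simp add: sum.inter_restrict[symmetric] indicator_def Int_def)
  also have "\<dots> \<le> 6 * M * R"
  proof (cases "J = {}")
    case True
    then show ?thesis using lipschitz_on_nonneg[OF lip] R by simp
  next
    case False
    define a where "a = Min J"
    define b where "b = Max J"
    have "finite J" unfolding J_def using F by simp
    then have J: "a \<in> J" "b \<in> J" "J \<subseteq> {a..b}" using False by (auto simp: a_def b_def)
    then have core_ends: "z + (real_of_int a * R) *\<^sub>R i \<in> axis_core S R"
      "z + (real_of_int b * R) *\<^sub>R i \<in> axis_core S R" by (simp_all add: J_def p_def)
    have in_core: "p j \<in> axis_core S R" if "j \<in> {a..b}" for j
    proof -
      have "real_of_int a * R \<le> real_of_int j * R" "real_of_int j * R \<le> real_of_int b * R"
        using that R by (simp_all add: mult_right_mono)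
      then show ?thesis unfolding p_def by (rule convex_line_between[OF convex_axis_core[OF S] core_ends])
    qed
    have "0 \<le> second_diff g R i (p j)" if "j \<in> {a..b}" for j
      using second_diff_nonneg[OF cv R] in_core[OF that] i by (auto simp: axis_core_def)
    then have "(\<Sum>j\<in>J. second_diff g R i (p j)) \<le> (\<Sum>j\<in>{a..b}. second_diff g R i (p j))"
      using J by (intro sum_mono2) auto
    also have "\<dots> \<le> 6 * M * R" unfolding p_def
    proof (rule sum_second_diff_lattice_le[OF lip R _ ])
      have "z + (real_of_int a * R) *\<^sub>R i + (-2*R) *\<^sub>R i \<in> S" "z + (real_of_int b * R) *\<^sub>R i + (2*R) *\<^sub>R i \<in> S"
        using core_ends i by (auto simp: axis_core_def)
      then have ends: "z + (real_of_int (a - 2) * R) *\<^sub>R i \<in> S" "z + (real_of_int (b + 2) * R) *\<^sub>R i \<in> S"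
        by (simp_all add: p_def algebra_simps)
      fix l assume "a - 2 \<le> l" "l \<le> b + 2"
      then have "real_of_int (a - 2) * R \<le> real_of_int l * R" "real_of_int l * R \<le> real_of_int (b + 2) * R"
        using R by (simp_all add: mult_right_mono)
      then show "z + (real_of_int l * R) *\<^sub>R i \<in> S" by (rule convex_line_between[OF S ends])
    qed (use J i in auto)
    finally show ?thesis .
  qed
  finally show ?thesis unfolding p_def .
qed

lemma second_diff_measurable [measurable]:
  assumes cv: "convex_on S g" and S: "open S" and R: "R > 0" and i: "i \<in> Basis"
  shows "(\<lambda>x. ennreal (indicator (axis_core S R) x * second_diff g R i x)) \<in> borel_measurable borel"
proof -
  have g: "continuous_on S g" by (rule convex_on_continuous[OF S cv])
  have shift: "continuous_on (axis_core S R) (\<lambda>x. g (x + c *\<^sub>R i))" if "-2*R \<le> c" "c \<le> 2*R" for c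
    using axis_core_line_mem[OF convex_on_imp_convex[OF cv] _ i that]
    by (intro continuous_on_compose2[OF g]) (auto intro!: continuous_intros)
  have "continuous_on (axis_core S R) (second_diff g R i)"
    unfolding second_diff_def[abs_def] by (intro continuous_intros shift) (use R in auto)
  then have "(\<lambda>x. indicator (axis_core S R) x *\<^sub>R second_diff g R i x) \<in> borel_measurable borel"
    using open_axis_core[OF S] by (intro borel_measurable_continuous_on_indicator) auto
  then show ?thesis by (simp add: measurable_compose[OF _ measurable_ennreal])
qed

lemma nn_integral_second_diff_le:
  fixes g :: "'a::euclidean_space \<Rightarrow> real"
  assumes cv: "convex_on S g" and S: "open S" and lip: "M-lipschitz_on S g" and R: "R > 0"
    and i: "i \<in> Basis" and not_inv: "\<not> (\<forall>w\<in>S. \<forall>t. w + t *\<^sub>R i \<in> S)"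
  shows "(\<integral>\<^sup>+x. ennreal (indicator (axis_core S R) x * second_diff g R i x) \<partial>lborel)
    \<le> ennreal (6 * M * R) * (ennreal (slab_const DIM('a) * R) * hausdorff_measure (DIM('a) - 1) (frontier S))"
proof -
  have "(\<integral>\<^sup>+x. ennreal (indicator (axis_core S R) x * second_diff g R i x) \<partial>lborel)
      \<le> ennreal (6 * M * R) * emeasure lborel (slab i R \<inter> cylinder S i)"
  proof (rule nn_integral_le_slab)
    fix z and F :: "int set" assume F: "finite F"
    let ?p = "\<lambda>j. z + (real_of_int j * R) *\<^sub>R i"
    have nonneg: "0 \<le> indicator (axis_core S R) x * second_diff g R i x" for x
      using second_diff_nonneg[OF cv R, of x i] i by (auto simp: indicator_def axis_core_def)
    show "(\<Sum>j\<in>F. ennreal (indicator (axis_core S R) (?p j) * second_diff g R i (?p j)))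
        \<le> ennreal (6 * M * R) * indicator (cylinder S i) z"
    proof (cases "z \<in> cylinder S i")
      case True
      then show ?thesis
        using sum_second_diff_on_line_le[OF cv lip R i F, of z] nonneg
        by (simp add: sum_ennreal ennreal_leI)
    next
      case False
      then have "?p j \<notin> axis_core S R" for j by (auto simp: cylinder_def axis_core_def)
      then show ?thesis by simp
    qed
  qed (use assms open_cylinder[OF S] in auto)
  also have "\<dots> \<le> ennreal (6 * M * R)
      * (ennreal (slab_const DIM('a) * R) * hausdorff_measure (DIM('a) - 1) (frontier S))"
    using i R convex_on_imp_convex[OF cv]
    by (intro mult_left_mono emeasure_slab_cylinder_frontier_le[OF S(1) _ not_inv]) auto
  finally show ?thesis .
qed

lemma emeasure_outside_axis_core_le:
  fixes S :: "'a::euclidean_space set"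
  assumes S: "open S" "convex S" and not_inv: "\<And>i. i \<in> Basis \<Longrightarrow> \<not> (\<forall>w\<in>S. \<forall>t. w + t *\<^sub>R i \<in> S)"
    and R: "R > 0"
  shows "emeasure lborel (S - axis_core S R)
    \<le> ennreal (4 * real DIM('a) * slab_const DIM('a) * R) * hausdorff_measure (DIM('a) - 1) (frontier S)"
proof -
  let ?H = "hausdorff_measure (DIM('a) - 1) (frontier S)"
  let ?L = "ennreal (slab_const DIM('a) * (2 * R)) * ?H"
  define V :: "'a set" where "V = Basis \<union> uminus ` Basis"
  define W where "W v = {x\<in>S. x + (2 * R) *\<^sub>R v \<notin> S}" for v :: 'a
  have W_le: "emeasure lborel (W v) \<le> ?L" if v: "v \<in> V" for v
  proof -
    obtain i where i: "i \<in> Basis" "v = i \<or> v = - i" using v unfolding V_def by blast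
    then have "norm v = 1" "\<not> (\<forall>w\<in>S. \<forall>t. w + t *\<^sub>R v \<in> S)"
      using not_inv[OF i(1)] translation_invariant_uminus[of S i] i(2) by auto
    then show ?thesis unfolding W_def using R by (intro emeasure_boundary_layer_le[OF S]) auto
  qed
  have W_sets: "W v \<in> sets lborel" for v :: 'a
  proof -
    have "W v = S - (\<lambda>x. x + (2 * R) *\<^sub>R v) -` S" by (auto simp: W_def)
    then show ?thesis using S(1) open_translation_vimage[OF S(1)] by simp
  qed
  have "S - axis_core S R \<subseteq> (\<Union>v\<in>V. W v)"
    by (auto simp: axis_core_def V_def W_def)
  then have "emeasure lborel (S - axis_core S R) \<le> emeasure lborel (\<Union>v\<in>V. W v)"
    using W_sets by (intro emeasure_mono sets.finite_UN) (auto simp: V_def)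
  also have "\<dots> \<le> (\<Sum>v\<in>V. emeasure lborel (W v))"
    using W_sets by (intro emeasure_subadditive_finite) (auto simp: V_def)
  also have "\<dots> \<le> (\<Sum>v\<in>V. ?L)" using W_le by (rule sum_mono)
  also have "\<dots> \<le> of_nat (2 * DIM('a)) * ?L"
  proof -
    have "card V \<le> 2 * DIM('a)"
      using card_Un_le[of "Basis::'a set" "uminus ` Basis"] card_image_le[of "Basis::'a set" uminus]
      by (simp add: V_def)
    then have "(of_nat (card V) :: ennreal) \<le> of_nat (2 * DIM('a))" by (rule of_nat_mono)
    then show ?thesis by (simp only: sum_constant) (rule mult_right_mono, simp_all)
  qed
  also have "\<dots> = ennreal (4 * real DIM('a) * slab_const DIM('a) * R) * ?H"
  proof -
    have "(of_nat (2 * DIM('a)) :: ennreal) * ennreal (slab_const DIM('a) * (2 * R))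
        = ennreal (real (2 * DIM('a)) * (slab_const DIM('a) * (2 * R)))"
      by (simp only: ennreal_of_nat_eq_real_of_nat ennreal_mult'[OF of_nat_0_le_iff])
    also have "real (2 * DIM('a)) * (slab_const DIM('a) * (2 * R)) = 4 * real DIM('a) * slab_const DIM('a) * R"
      by simp
    finally show ?thesis by (metis mult.assoc)
  qed
  finally show ?thesis .
qed

section \<open>The linearization error\<close>

lemma lipschitz_on_half_norm_sq:
  fixes S :: "'a::real_normed_vector set"
  assumes S: "bounded S" and x0: "x0 \<in> S"
  shows "(diameter S)-lipschitz_on S (\<lambda>x. (norm (x - x0))\<^sup>2 / 2)"
proof (rule lipschitz_onI)
  fix a b assume a: "a \<in> S" and b: "b \<in> S"
  have "(norm (a - x0))\<^sup>2 - (norm (b - x0))\<^sup>2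
      = (norm (a - x0) - norm (b - x0)) * (norm (a - x0) + norm (b - x0))"
    by (simp add: power2_eq_square algebra_simps)
  then have "\<bar>(norm (a - x0))\<^sup>2 - (norm (b - x0))\<^sup>2\<bar>
      = \<bar>norm (a - x0) - norm (b - x0)\<bar> * (norm (a - x0) + norm (b - x0))"
    by (simp add: abs_mult)
  also have "\<dots> \<le> dist a b * (2 * diameter S)"
  proof (rule mult_mono)
    show "\<bar>norm (a - x0) - norm (b - x0)\<bar> \<le> dist a b"
      using norm_triangle_ineq3[of "a - x0" "b - x0"] by (simp add: dist_norm)
    show "norm (a - x0) + norm (b - x0) \<le> 2 * diameter S"
      using diameter_bounded_bound[OF S a x0] diameter_bounded_bound[OF S b x0] by (simp add: dist_norm)
  qed auto
  finally show "dist ((norm (a - x0))\<^sup>2 / 2) ((norm (b - x0))\<^sup>2 / 2) \<le> diameter S * dist a b"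
    by (simp add: dist_real_def abs_divide field_simps)
qed (rule diameter_ge_0[OF S])

lemma convex_lipschitz_add_quadratic:
  fixes f :: "'a::euclidean_space \<Rightarrow> real"
  assumes S: "convex S" "x0 \<in> S" and \<mu>: "\<mu> \<ge> 0" and cv: "convex_on S (\<lambda>x. f x + \<mu> * (norm x)\<^sup>2 / 2)"
    and lip: "L-lipschitz_on S f" and bounded: "\<mu> > 0 \<Longrightarrow> bounded S"
  shows "convex_on S (\<lambda>x. f x + \<mu> / 2 * (norm (x - x0))\<^sup>2)"
    and "(L + \<mu> * diameter S)-lipschitz_on S (\<lambda>x. f x + \<mu> / 2 * (norm (x - x0))\<^sup>2)"
proof -
  have eq: "(\<lambda>x. f x + \<mu> / 2 * (norm (x - x0))\<^sup>2)
      = (\<lambda>x. (f x + \<mu> * (norm x)\<^sup>2 / 2) + (\<mu> * (norm x0)\<^sup>2 / 2 + x \<bullet> (- \<mu> *\<^sub>R x0)))"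
    by (simp add: fun_eq_iff power2_norm_eq_inner inner_diff_left inner_diff_right inner_commute algebra_simps)
  have affine: "convex_on S (\<lambda>x. c + x \<bullet> w)" for c w
    by (rule convex_onI[OF _ S(1)]) (simp add: inner_add_left algebra_simps)
  show "convex_on S (\<lambda>x. f x + \<mu> / 2 * (norm (x - x0))\<^sup>2)"
    unfolding eq by (rule convex_on_add[OF cv affine])
  show "(L + \<mu> * diameter S)-lipschitz_on S (\<lambda>x. f x + \<mu> / 2 * (norm (x - x0))\<^sup>2)"
  proof (cases "\<mu> = 0")
    case False
    have "(\<mu> * diameter S)-lipschitz_on S (\<lambda>x. \<mu> * ((norm (x - x0))\<^sup>2 / 2))"
      using False \<mu> by (intro lipschitz_on_cmult_real_nonneg lipschitz_on_half_norm_sq bounded S(2)) auto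
    from lipschitz_on_add[OF lip this] show ?thesis by simp
  qed (use lip in simp)
qed

definition linearization_error :: "('a::euclidean_space \<Rightarrow> real) \<Rightarrow> 'a set \<Rightarrow> real \<Rightarrow> 'a \<Rightarrow> ennreal" where
  "linearization_error f S r x = (SUP y\<in>ball x r \<inter> S.
     ennreal \<bar>f y - (f x + (if f differentiable (at x) then frechet_derivative f (at x) (y - x) else 0))\<bar>)"

lemma linearization_gap_le:
  fixes g :: "'a::euclidean_space \<Rightarrow> real"
  assumes cv: "convex_on S g" and S: "open S" and lip: "M-lipschitz_on S g"
    and x: "x \<in> S" and Dg: "(g has_derivative Dg) (at x)" and y: "y \<in> S" "norm (y - x) < r"
  shows "g y - g x - Dg (y - x) \<le> (if x \<in> axis_core S (real DIM('a) * r)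
      then \<Sum>i\<in>Basis. second_diff g (real DIM('a) * r) i x else 2 * M * r)"
proof (cases "x \<in> axis_core S (real DIM('a) * r)")
  case True
  have dv: "real DIM('a) * norm (y - x) \<le> real DIM('a) * r" using y(2) by (intro mult_left_mono) auto
  have "r > 0" using le_less_trans[OF norm_ge_zero y(2)] .
  then have "g (x + (y - x)) - g x - Dg (y - x) \<le> (\<Sum>i\<in>Basis. second_diff g (real DIM('a) * r) i x)"
    using True by (intro linearization_le_sum_second_diff[OF cv x Dg _ _ dv]) (auto simp: axis_core_def)
  then show ?thesis using True by simp
next
  case False
  have "\<bar>g y - g x\<bar> \<le> M * norm (y - x)" using lipschitz_onD[OF lip y(1) x] by (simp add: dist_real_def dist_norm)
  moreover have "\<bar>Dg (y - x)\<bar> \<le> M * norm (y - x)" by (rule lipschitz_on_derivative_bound[OF S x Dg lip])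
  moreover have "M * norm (y - x) \<le> M * r" using y(2) lipschitz_on_nonneg[OF lip] by (simp add: mult_left_mono)
  ultimately show ?thesis using False by simp
qed

lemma has_derivative_diff_quadratic:
  assumes "(g has_derivative Dg) (at x)"
  shows "((\<lambda>y. g y - \<mu> / 2 * (norm (y - x0))\<^sup>2) has_derivative (\<lambda>v. Dg v - \<mu> * ((x - x0) \<bullet> v))) (at x)"
proof -
  have "((\<lambda>y. g y - \<mu> / 2 * ((y - x0) \<bullet> (y - x0))) has_derivative (\<lambda>v. Dg v - \<mu> * ((x - x0) \<bullet> v))) (at x)"
    by (auto intro!: derivative_eq_intros assms simp: inner_commute algebra_simps)
  then show ?thesis by (simp add: power2_norm_eq_inner)
qed

lemma linearization_error_le:
  fixes g f :: "'a::euclidean_space \<Rightarrow> real"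
  assumes cv: "convex_on S g" and S: "open S" and lip: "M-lipschitz_on S g"
    and x: "x \<in> S" and Dg: "(g has_derivative Dg) (at x)" and \<mu>: "\<mu> \<ge> 0"
    and f: "\<And>y. f y = g y - \<mu> / 2 * (norm (y - x0))\<^sup>2"
  shows "linearization_error f S r x
    \<le> ennreal (if x \<in> axis_core S (real DIM('a) * r)
               then \<Sum>i\<in>Basis. second_diff g (real DIM('a) * r) i x else 2 * M * r)
      + ennreal (\<mu> * r\<^sup>2 / 2)"
  unfolding linearization_error_def
proof (rule SUP_least)
  define bound where "bound = (if x \<in> axis_core S (real DIM('a) * r)
      then \<Sum>i\<in>Basis. second_diff g (real DIM('a) * r) i x else 2 * M * r)"
  define Df where "Df v = Dg v - \<mu> * ((x - x0) \<bullet> v)" for v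
  have "(f has_derivative Df) (at x)"
    unfolding Df_def f[abs_def] by (rule has_derivative_diff_quadratic[OF Dg])
  then have fD: "f differentiable (at x)" "frechet_derivative f (at x) = Df"
    by (auto intro: differentiableI frechet_derivative_at[symmetric])
  fix y assume y: "y \<in> ball x r \<inter> S"
  define v where "v = y - x"
  have v: "norm v < r" using y by (auto simp: v_def dist_norm norm_minus_commute)
  define gap where "gap = g y - g x - Dg v"
  have gap: "0 \<le> gap" "gap \<le> bound"
    using convex_on_ge_linearization[OF cv x _ Dg, of y] linearization_gap_le[OF cv S lip x Dg, of y r] y v
    by (simp_all add: gap_def v_def bound_def)
  have "(norm (a + b))\<^sup>2 = (norm a)\<^sup>2 + 2 * (b \<bullet> a) + (norm b)\<^sup>2" for a b :: 'a
    by (simp add: power2_norm_eq_inner inner_add_left inner_add_right inner_commute)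
  from this[of v "x - x0"] have nrm: "(norm (y - x0))\<^sup>2 = (norm v)\<^sup>2 + 2 * ((x - x0) \<bullet> v) + (norm (x - x0))\<^sup>2"
    by (simp add: v_def)
  have eq: "f y - (f x + Df v) = gap - \<mu> / 2 * (norm v)\<^sup>2"
    unfolding f nrm by (simp add: gap_def Df_def algebra_simps)
  have "0 \<le> \<mu> / 2 * (norm v)\<^sup>2" "\<mu> / 2 * (norm v)\<^sup>2 \<le> \<mu> * r\<^sup>2 / 2"
    using v \<mu> by (simp_all add: power_mono mult_left_mono)
  then have "\<bar>f y - (f x + Df v)\<bar> \<le> bound + \<mu> * r\<^sup>2 / 2" unfolding eq using gap by (simp add: abs_le_iff)
  then show "ennreal \<bar>f y - (f x + (if f differentiable (at x) then frechet_derivative f (at x) (y - x) else 0))\<bar>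
      \<le> ennreal bound + ennreal (\<mu> * r\<^sup>2 / 2)"
    using fD gap \<mu> by (simp add: v_def ennreal_plus[symmetric] ennreal_leI del: ennreal_plus)
qed

lemma ennreal_mult_mult: "0 \<le> a \<Longrightarrow> 0 \<le> b \<Longrightarrow> ennreal a * (ennreal b * H) = ennreal (a * b) * H"
  by (simp add: ennreal_mult mult.assoc)

lemma axis_core_bound_eq_sum:
  assumes "convex_on S g" "R > 0"
  shows "ennreal (if x \<in> axis_core S R then \<Sum>i\<in>Basis. second_diff g R i x else c) * indicator S x
    = (\<Sum>i\<in>Basis. ennreal (indicator (axis_core S R) x * second_diff g R i x))
      + ennreal c * indicator (S - axis_core S R) x"
  using second_diff_nonneg[OF assms, of x] by (auto simp: indicator_def axis_core_def sum_ennreal)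

lemma nn_integral_linearization_bound_le:
  fixes g :: "'a::euclidean_space \<Rightarrow> real"
  assumes cv: "convex_on S g" and S: "open S" and lip: "M-lipschitz_on S g" and r: "r > 0"
    and not_inv: "\<And>i. i \<in> Basis \<Longrightarrow> \<not> (\<forall>w\<in>S. \<forall>t. w + t *\<^sub>R i \<in> S)"
  shows "(\<integral>\<^sup>+x. (\<Sum>i\<in>Basis. ennreal (indicator (axis_core S (real DIM('a) * r)) x
                                  * second_diff g (real DIM('a) * r) i x))
             + ennreal (2 * M * r) * indicator (S - axis_core S (real DIM('a) * r)) x \<partial>lborel)
    \<le> ennreal ((6 * real DIM('a) ^ 3 + 8 * real DIM('a) ^ 2) * slab_const DIM('a) * M * r\<^sup>2)
      * hausdorff_measure (DIM('a) - 1) (frontier S)"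
proof -
  let ?d = "real DIM('a)"
  let ?R = "?d * r"
  let ?A = "axis_core S ?R"
  let ?K = "slab_const DIM('a)"
  let ?H = "hausdorff_measure (DIM('a) - 1) (frontier S)"
  have R: "?R > 0" using r by simp
  have M: "0 \<le> M" using lip by (rule lipschitz_on_nonneg)
  have K: "0 < ?K" by (rule slab_const_pos)
  have [measurable]: "S \<in> sets borel" "?A \<in> sets borel" using S open_axis_core[OF S] by simp_all
  have "(\<integral>\<^sup>+x. (\<Sum>i\<in>Basis. ennreal (indicator ?A x * second_diff g ?R i x))
        + ennreal (2 * M * r) * indicator (S - ?A) x \<partial>lborel)
      = (\<Sum>i\<in>Basis. \<integral>\<^sup>+x. ennreal (indicator ?A x * second_diff g ?R i x) \<partial>lborel)
        + ennreal (2 * M * r) * emeasure lborel (S - ?A)"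
    using second_diff_measurable[OF cv S R]
    by (simp add: nn_integral_add nn_integral_sum nn_integral_cmult_indicator)
  also have "\<dots> \<le> (\<Sum>i\<in>(Basis::'a set). ennreal (6 * M * ?R) * (ennreal (?K * ?R) * ?H))
        + ennreal (2 * M * r) * (ennreal (4 * ?d * ?K * ?R) * ?H)"
    by (intro add_mono sum_mono mult_left_mono nn_integral_second_diff_le[OF cv S lip R]
        emeasure_outside_axis_core_le[OF S convex_on_imp_convex[OF cv] not_inv R] not_inv) auto
  also have "\<dots> = ennreal (?d * (6 * M * ?R * (?K * ?R)) + 2 * M * r * (4 * ?d * ?K * ?R)) * ?H"
    using M R K r
    by (simp add: ennreal_mult_mult ennreal_of_nat_eq_real_of_nat distrib_right ennreal_plus)
  also have "?d * (6 * M * ?R * (?K * ?R)) + 2 * M * r * (4 * ?d * ?K * ?R)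
      = (6 * ?d ^ 3 + 8 * ?d ^ 2) * ?K * M * r\<^sup>2"
    by (simp add: power2_eq_square power3_eq_cube algebra_simps)
  finally show ?thesis .
qed

definition main_const :: "nat \<Rightarrow> real" where
  "main_const d = slab_const d * (6 * real d ^ 3 + 8 * real d ^ 2 + 1)"

lemma main_const_pos: "main_const d > 0"
  unfolding main_const_def using slab_const_pos[of d] by (intro mult_pos_pos) (auto intro: add_nonneg_pos)

lemma ennreal_mult_add_le:
  assumes "0 \<le> a" "0 \<le> b" "a + b \<le> c"
  shows "ennreal a * H + ennreal b * H \<le> ennreal c * H"
proof -
  have "ennreal a * H + ennreal b * H = ennreal (a + b) * H"
    using assms(1,2) by (simp add: ennreal_plus distrib_right)
  also have "\<dots> \<le> ennreal c * H" using assms(3) by (intro mult_right_mono ennreal_leI) auto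
  finally show ?thesis .
qed

lemma linearization_error_ae_le:
  fixes g f :: "'a::euclidean_space \<Rightarrow> real"
  assumes cv: "convex_on S g" and S: "open S" and lip: "M-lipschitz_on S g" and r: "r > 0" and \<mu>: "\<mu> \<ge> 0"
    and f: "\<And>y. f y = g y - \<mu> / 2 * (norm (y - x0))\<^sup>2"
  shows "AE x in lborel. linearization_error f S r x * indicator S x
    \<le> (\<Sum>i\<in>Basis. ennreal (indicator (axis_core S (real DIM('a) * r)) x * second_diff g (real DIM('a) * r) i x))
      + ennreal (2 * M * r) * indicator (S - axis_core S (real DIM('a) * r)) x
      + ennreal (\<mu> * r\<^sup>2 / 2) * indicator S x"
proof -
  interpret convex_lipschitz g S M using cv S lip by unfold_locales
  obtain N where N: "N \<in> null_sets lborel" and diff: "\<And>x. x \<in> S - N \<Longrightarrow> g differentiable (at x)"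
    using differentiable_ae by blast
  have "AE x in lborel. x \<notin> N" using N by (rule AE_not_in)
  then show ?thesis
  proof eventually_elim
    case (elim x)
    show ?case
    proof (cases "x \<in> S")
      case True
      obtain Dg where "(g has_derivative Dg) (at x)" using diff True elim unfolding differentiable_def by blast
      from linearization_error_le[OF cv S lip True this \<mu> f, where r = r] show ?thesis
        using True axis_core_bound_eq_sum[OF cv, of "real DIM('a) * r" x "2 * M * r"] r by simp
    qed simp
  qed
qed

lemma emeasure_quadratic_term_le:
  fixes S :: "'a::euclidean_space set"
  assumes S: "open S" "convex S" "S \<noteq> {}"
    and not_inv: "\<And>i. i \<in> Basis \<Longrightarrow> \<not> (\<forall>w\<in>S. \<forall>t. w + t *\<^sub>R i \<in> S)"
    and \<mu>: "\<mu> \<ge> 0" and bounded: "\<mu> > 0 \<Longrightarrow> bounded S"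
  shows "ennreal (\<mu> * r\<^sup>2 / 2) * emeasure lborel S
    \<le> ennreal (slab_const DIM('a) * r\<^sup>2 * (\<mu> * diameter S)) * hausdorff_measure (DIM('a) - 1) (frontier S)"
proof (cases "\<mu> = 0")
  case False
  obtain i :: 'a where i: "i \<in> Basis" using nonempty_Basis by blast
  have "ennreal (\<mu> * r\<^sup>2 / 2) * emeasure lborel S
      \<le> ennreal (\<mu> * r\<^sup>2 / 2)
        * (ennreal (slab_const DIM('a) * (2 * diameter S)) * hausdorff_measure (DIM('a) - 1) (frontier S))"
    using False \<mu> i not_inv[OF i] by (intro mult_left_mono emeasure_le_diameter_hausdorff[OF S bounded]) auto
  also have "\<dots> = ennreal (slab_const DIM('a) * r\<^sup>2 * (\<mu> * diameter S)) * hausdorff_measure (DIM('a) - 1) (frontier S)"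
    using \<mu> slab_const_pos[of "DIM('a)"] diameter_ge_0[OF bounded] False
    by (subst ennreal_mult_mult) (simp_all add: algebra_simps)
  finally show ?thesis .
qed simp

lemma nn_integral_linearization_error_le:
  fixes f :: "'a::euclidean_space \<Rightarrow> real"
  assumes S: "open S" "convex S" "S \<noteq> {}"
    and not_inv: "\<And>i. i \<in> Basis \<Longrightarrow> \<not> (\<forall>w\<in>S. \<forall>t. w + t *\<^sub>R i \<in> S)"
    and \<mu>: "\<mu> \<ge> 0" and cv: "convex_on S (\<lambda>x. f x + \<mu> * (norm x)\<^sup>2 / 2)"
    and lip: "L-lipschitz_on S f" and bounded: "\<mu> > 0 \<Longrightarrow> bounded S" and r: "r > 0"
  shows "(\<integral>\<^sup>+x\<in>S. linearization_error f S r x \<partial>lebesgue)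
    \<le> ennreal (main_const DIM('a) * r\<^sup>2 * (L + \<mu> * diameter S)) * hausdorff_measure (DIM('a) - 1) (frontier S)"
proof -
  let ?d = "real DIM('a)"
  let ?A = "axis_core S (?d * r)"
  let ?K = "slab_const DIM('a)"
  let ?H = "hausdorff_measure (DIM('a) - 1) (frontier S)"
  obtain x0 where x0: "x0 \<in> S" using S(3) by blast
  define g where "g x = f x + \<mu> / 2 * (norm (x - x0))\<^sup>2" for x
  define M where "M = L + \<mu> * diameter S"
  have cvg: "convex_on S g" and lipg: "M-lipschitz_on S g"
    using convex_lipschitz_add_quadratic[OF S(2) x0 \<mu> cv lip bounded] by (simp_all add: g_def[abs_def] M_def)
  define \<psi> where "\<psi> x = (\<Sum>i\<in>Basis. ennreal (indicator ?A x * second_diff g (?d * r) i x))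
      + ennreal (2 * M * r) * indicator (S - ?A) x" for x
  have [measurable]: "S \<in> sets borel" "?A \<in> sets borel" using S(1) open_axis_core[OF S(1)] by simp_all
  have "(\<lambda>x. \<Sum>i\<in>Basis. ennreal (indicator ?A x * second_diff g (?d * r) i x)) \<in> borel_measurable borel"
    using r by (intro borel_measurable_sum second_diff_measurable[OF cvg S(1)]) auto
  then have [measurable]: "\<psi> \<in> borel_measurable borel" unfolding \<psi>_def by measurable
  have "(\<integral>\<^sup>+x\<in>S. linearization_error f S r x \<partial>lebesgue)
      \<le> (\<integral>\<^sup>+x. \<psi> x + ennreal (\<mu> * r\<^sup>2 / 2) * indicator S x \<partial>lborel)"
    unfolding nn_integral_completion \<psi>_def
    by (intro nn_integral_mono_AE linearization_error_ae_le[OF cvg S(1) lipg r \<mu>, of f x0]) (simp add: g_def)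
  also have "\<dots> = (\<integral>\<^sup>+x. \<psi> x \<partial>lborel) + ennreal (\<mu> * r\<^sup>2 / 2) * emeasure lborel S"
    by (simp add: nn_integral_add nn_integral_cmult_indicator)
  also have "\<dots> \<le> ennreal ((6 * ?d ^ 3 + 8 * ?d ^ 2) * ?K * M * r\<^sup>2) * ?H
      + ennreal (?K * r\<^sup>2 * (\<mu> * diameter S)) * ?H"
    unfolding \<psi>_def
    by (intro add_mono nn_integral_linearization_bound_le[OF cvg S(1) lipg r not_inv]
        emeasure_quadratic_term_le[OF S not_inv \<mu> bounded])
  also have "\<dots> \<le> ennreal (main_const DIM('a) * r\<^sup>2 * M) * ?H"
  proof (rule ennreal_mult_add_le)
    have diam: "0 \<le> \<mu> * diameter S" "\<mu> * diameter S \<le> M"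
      using \<mu> bounded diameter_ge_0[of S] lipschitz_on_nonneg[OF lip] by (cases "\<mu> = 0", auto simp: M_def)
    have K: "0 \<le> ?K * r\<^sup>2" using slab_const_pos[of "DIM('a)"] by simp
    then show "0 \<le> ?K * r\<^sup>2 * (\<mu> * diameter S)" using diam(1) by simp
    have "?K * r\<^sup>2 * (\<mu> * diameter S) \<le> ?K * r\<^sup>2 * M" using diam(2) K by (rule mult_left_mono)
    then show "(6 * ?d ^ 3 + 8 * ?d ^ 2) * ?K * M * r\<^sup>2 + ?K * r\<^sup>2 * (\<mu> * diameter S)
        \<le> main_const DIM('a) * r\<^sup>2 * M"
      by (simp add: main_const_def algebra_simps)
    show "0 \<le> (6 * ?d ^ 3 + 8 * ?d ^ 2) * ?K * M * r\<^sup>2"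
      using slab_const_pos[of "DIM('a)"] lipschitz_on_nonneg[OF lipg] by simp
  qed
  finally show ?thesis unfolding M_def .
qed

lemma lipschitz_on_lip_const:
  assumes "lip_const S f \<noteq> top"
  shows "(enn2real (lip_const S f))-lipschitz_on S f"
proof (rule lipschitz_onI)
  fix a b assume ab: "a \<in> S" "b \<in> S"
  show "dist (f a) (f b) \<le> enn2real (lip_const S f) * dist a b"
  proof (cases "a = b")
    case False
    then have "ennreal (\<bar>f a - f b\<bar> / dist a b) \<le> lip_const S f"
      unfolding lip_const_def using ab by (intro SUP_upper2[of "(a, b)"]) auto
    also have "\<dots> = ennreal (enn2real (lip_const S f))" using assms by (simp add: ennreal_enn2real_if)
    finally show ?thesis using False by (simp add: ennreal_le_iff dist_real_def divide_le_eq mult.commute)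
  qed simp
qed simp

lemma nn_integral_linearization_error_eq_0:
  assumes S: "open S" and lip: "lip_const S f = 0"
  shows "(\<integral>\<^sup>+x\<in>S. linearization_error f S r x \<partial>lebesgue) = 0"
proof -
  have "linearization_error f S r x = 0" if x: "x \<in> S" for x
  proof -
    have const: "f y = f x" if "y \<in> S" for y
      using lipschitz_onD[OF lipschitz_on_lip_const[of S f], of y x] lip that x by (simp add: dist_real_def)
    have "(f has_derivative (\<lambda>_. 0)) (at x)"
      by (rule has_derivative_transform_within_open[OF has_derivative_const S x, of "f x"]) (simp add: const)
    then have "f differentiable (at x)" "frechet_derivative f (at x) = (\<lambda>_. 0)"
      by (auto intro: differentiableI frechet_derivative_at[symmetric])
    then show ?thesis by (simp add: linearization_error_def const flip: bot_ennreal)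
  qed
  then have "(\<lambda>x. linearization_error f S r x * indicator S x) = (\<lambda>x. 0)"
    by (auto simp: fun_eq_iff indicator_def)
  then show ?thesis by simp
qed

lemma nn_integral_linearization_error_le_lip_const:
  fixes f :: "'a::euclidean_space \<Rightarrow> real"
  assumes \<Omega>: "open \<Omega>" "convex \<Omega>" "\<Omega> \<noteq> {}" "\<Omega> \<noteq> UNIV" and lam: "lam \<le> 0"
    and cv: "lambda_convex_on lam \<Omega> f" and r: "r > 0"
    and H: "hausdorff_measure (DIM('a) - 1) (frontier \<Omega>) \<noteq> top"
    and P: "lip_const \<Omega> f + ennreal \<bar>lam\<bar> * ediam \<Omega> \<noteq> top"
  shows "(\<integral>\<^sup>+x\<in>\<Omega>. linearization_error f \<Omega> r x \<partial>lebesgue)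
    \<le> ennreal (main_const DIM('a) * r\<^sup>2) * hausdorff_measure (DIM('a) - 1) (frontier \<Omega>)
      * (lip_const \<Omega> f + ennreal \<bar>lam\<bar> * ediam \<Omega>)"
proof -
  define L where "L = enn2real (lip_const \<Omega> f)"
  have L: "lip_const \<Omega> f = ennreal L" "L-lipschitz_on \<Omega> f"
    using P lipschitz_on_lip_const[of \<Omega> f] by (auto simp: L_def ennreal_enn2real_if)
  have bounded: "bounded \<Omega>" if "- lam > 0"
    using P that by (cases "bounded \<Omega>") (auto simp: ediam_def ennreal_mult_top)
  have P_eq: "lip_const \<Omega> f + ennreal \<bar>lam\<bar> * ediam \<Omega> = ennreal (L + - lam * diameter \<Omega>)"
  proof (cases "lam = 0")
    case False
    then have "bounded \<Omega>" using lam bounded by simp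
    moreover have "ennreal (L + - lam * diameter \<Omega>) = ennreal L + ennreal (- lam) * ennreal (diameter \<Omega>)"
      using lam diameter_ge_0[OF \<open>bounded \<Omega>\<close>] lipschitz_on_nonneg[OF L(2)] mult_nonpos_nonneg[of lam]
      by (simp add: ennreal_mult[symmetric] ennreal_plus[symmetric] del: ennreal_plus)
    ultimately show ?thesis using lam by (simp add: L(1) ediam_def)
  qed (simp add: L(1))
  have not_inv: "\<not> (\<forall>w\<in>\<Omega>. \<forall>t. w + t *\<^sub>R i \<in> \<Omega>)" if "i \<in> Basis" for i
    using hausdorff_frontier_eq_top[OF \<Omega> that] H by blast
  have "convex_on \<Omega> (\<lambda>x. f x + - lam * (norm x)\<^sup>2 / 2)"
    using cv by (simp add: lambda_convex_on_def)
  from nn_integral_linearization_error_le[OF \<Omega>(1-3) not_inv _ this L(2) bounded r] lam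
  have "(\<integral>\<^sup>+x\<in>\<Omega>. linearization_error f \<Omega> r x \<partial>lebesgue)
      \<le> ennreal (main_const DIM('a) * r\<^sup>2 * (L + - lam * diameter \<Omega>)) * hausdorff_measure (DIM('a) - 1) (frontier \<Omega>)"
    by simp
  also have "\<dots> = ennreal (main_const DIM('a) * r\<^sup>2) * hausdorff_measure (DIM('a) - 1) (frontier \<Omega>)
      * (lip_const \<Omega> f + ennreal \<bar>lam\<bar> * ediam \<Omega>)"
  proof -
    have "0 \<le> L + - lam * diameter \<Omega>"
    proof (cases "lam = 0")
      case False
      then have d: "0 \<le> diameter \<Omega>" using lam bounded diameter_ge_0 by simp
      show ?thesis using mult_nonpos_nonneg[OF lam d] lipschitz_on_nonneg[OF L(2)] by linarith
    qed (use lipschitz_on_nonneg[OF L(2)] in simp)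
    then have "ennreal (main_const DIM('a) * r\<^sup>2 * (L + - lam * diameter \<Omega>))
        = ennreal (main_const DIM('a) * r\<^sup>2) * ennreal (L + - lam * diameter \<Omega>)"
      using main_const_pos[of "DIM('a)"] by (intro ennreal_mult) auto
    then show ?thesis unfolding P_eq by (simp only: ac_simps)
  qed
  finally show ?thesis .
qed

theorem lemma3p6:
  "\<exists>C::real. C \<ge> 0 \<and>
     (\<forall>(\<Omega>::'a::euclidean_space set) (f::'a \<Rightarrow> real) (lam::real) (r::real).
        open \<Omega> \<and> convex \<Omega> \<and> \<Omega> \<noteq> UNIV \<and> lam \<le> 0 \<and> lambda_convex_on lam \<Omega> f \<and> r > 0 \<longrightarrow>
        (\<integral>\<^sup>+ x \<in> \<Omega>. (SUP y\<in>ball x r \<inter> \<Omega>.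
              ennreal \<bar>f y - (f x + (if f differentiable (at x)
                                        then frechet_derivative f (at x) (y - x) else 0))\<bar>) \<partial>lebesgue)
        \<le> ennreal (C * r\<^sup>2) * hausdorff_measure (DIM('a) - 1) (frontier \<Omega>)
            * (lip_const \<Omega> f + ennreal \<bar>lam\<bar> * ediam \<Omega>))"
proof (intro exI[of _ "main_const DIM('a)"] conjI allI impI)
  show "main_const DIM('a) \<ge> 0" using main_const_pos by (rule less_imp_le)
  fix \<Omega> :: "'a set" and f :: "'a \<Rightarrow> real" and lam r :: real
  assume "open \<Omega> \<and> convex \<Omega> \<and> \<Omega> \<noteq> UNIV \<and> lam \<le> 0 \<and> lambda_convex_on lam \<Omega> f \<and> r > 0"
  then have \<Omega>: "open \<Omega>" "convex \<Omega>" "\<Omega> \<noteq> UNIV" and lam: "lam \<le> 0" "lambda_convex_on lam \<Omega> f" and r: "r > 0"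
    by auto
  let ?H = "hausdorff_measure (DIM('a) - 1) (frontier \<Omega>)"
  let ?P = "lip_const \<Omega> f + ennreal \<bar>lam\<bar> * ediam \<Omega>"
  have "(\<integral>\<^sup>+x\<in>\<Omega>. linearization_error f \<Omega> r x \<partial>lebesgue) \<le> ennreal (main_const DIM('a) * r\<^sup>2) * ?H * ?P"
  proof (cases "\<Omega> = {} \<or> lip_const \<Omega> f = 0")
    case True
    then show ?thesis using nn_integral_linearization_error_eq_0[OF \<Omega>(1)] by auto
  next
    case False
    then have "\<Omega> \<noteq> {}" "?P \<noteq> 0" by auto
    moreover have "?H \<noteq> 0" using hausdorff_frontier_pos[OF \<Omega>(1,2) \<open>\<Omega> \<noteq> {}\<close> \<Omega>(3)] by simp
    ultimately show ?thesis
      using nn_integral_linearization_error_le_lip_const[OF \<Omega>(1,2) \<open>\<Omega> \<noteq> {}\<close> \<Omega>(3) lam r]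
        main_const_pos[of "DIM('a)"] r
      by (cases "?H = top \<or> ?P = top") (auto simp: ennreal_mult_eq_top_iff)
  qed
  then show "(\<integral>\<^sup>+ x \<in> \<Omega>. (SUP y\<in>ball x r \<inter> \<Omega>.
              ennreal \<bar>f y - (f x + (if f differentiable (at x)
                                        then frechet_derivative f (at x) (y - x) else 0))\<bar>) \<partial>lebesgue)
      \<le> ennreal (main_const DIM('a) * r\<^sup>2) * ?H * ?P"
    by (simp add: linearization_error_def)
qed

end
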